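(* Let $\sigma,\tau,\bar\sigma,\bar\tau$ satisfy the Standing Hypothesis and let $m\ge1$ and $0\le x\le m$ be integers. Then $$\{\sigma,m,m+1,\tau\,|\,\bar\sigma,x,\bar\tau\}-\{\sigma,m+1,m,\tau\,|\,\bar\sigma,x,\bar\tau\} =-\{\sigma\backslash\sigma_s,m+\sigma_s,m+1,\tau\,|\,\bar\sigma\backslash\bar\sigma_s,m+1,\bar\tau\}+\{\sigma,m+1,m+\tau_1,\tau\backslash\tau_1\,|\,\bar\sigma,m+1,\bar\tau\backslash\bar\tau_1\},$$ where the first term on the right is omitted if $s=0$ and the second is omitted if $t=0$.
   Context: Overlap notation: for $\alpha=(\alpha_1,\dots,\alpha_L)$ with $\alpha_i\ge1$ and $\beta=(\beta_1,\dots,\beta_{L-1})$ with $0\le\beta_i\le\min\{\alpha_i,\alpha_{i+1}\}$, $(\alpha\,|\,\beta)$ is the skew diagram $\lambda/\mu$ (boxes $(i,j)$ with $\mu_i<j\le\lambda_i$, identified up to deleting empty rows/columns) with $L$ nonempty rows, $\lambda_i-\mu_i=\alpha_i$, $\lambda_{i+1}-\mu_i=\beta_i$ (row $i$ has $\alpha_i$ boxes, rows $i,i+1$ share $\beta_i$ columns); $\{\alpha\,|\,\beta\}=s_{\lambda/\mu}$ is its skew Schur function (generating function of semistandard Young tableaux of that shape). Commas denote concatenation of sequences. Standing Hypothesis: $\sigma=(\sigma_1,\dots,\sigma_s)$, $\tau=(\tau_1,\dots,\tau_t)$ compositions, $s,t\ge0$; $\bar\sigma,\bar\tau$ sequences of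 non-negative integers of lengths $s,t$; $\bar\sigma_s=1$ if $s>0$; $\bar\tau_1=1$ if $t>0$; $\bar\sigma_i\le\min\{\sigma_i,\sigma_{i+1}\}$ ($1\le i<s$), $\bar\tau_i\le\min\{\tau_i,\tau_{i-1}\}$ ($1<i\le t$). $\sigma\backslash\sigma_s$ removes the last part of $\sigma$, $\tau\backslash\tau_1$ removes the first part of $\tau$, and similarly for $\bar\sigma\backslash\bar\sigma_s$, $\bar\tau\backslash\bar\tau_1$. *)

theory Defs
  imports Main
begin

text \<open>Rows are indexed 0..L-1 (top to bottom, English
convention), columns by integers. rend a b i is lambda_i (right end of row i), normalised
so that rend a b 0 = 0; then mu_i = lambda_i - alpha_i and lambda_(i+1) = mu_i + beta_i.\<close>

fun rend :: "nat list \<Rightarrow> nat list \<Rightarrow> nat \<Rightarrow> int" where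
  "rend a b 0 = 0"
| "rend a b (Suc i) = rend a b i - int (a ! i) + int (b ! i)"

definition cells :: "nat list \<Rightarrow> nat list \<Rightarrow> (nat \<times> int) set" where
  "cells a b = {(i, j). i < length a \<and> rend a b i - int (a ! i) < j \<and> j \<le> rend a b i}"

definition ssyt :: "nat \<Rightarrow> (nat \<times> int) set \<Rightarrow> ((nat \<times> int) \<Rightarrow> nat) set" where
  "ssyt n D = {T. (\<forall>c\<in>D. T c < n) \<and> (\<forall>c. c \<notin> D \<longrightarrow> T c = 0)
     \<and> (\<forall>i j j'. (i, j) \<in> D \<and> (i, j') \<in> D \<and> j < j' \<longrightarrow> T (i, j) \<le> T (i, j'))
     \<and> (\<forall>i i' j. (i, j) \<in> D \<and> (i', j) \<in> D \<and> i < i' \<longrightarrow> T (i, j) < T (i', j))}"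

text \<open>{alpha | beta} = skew Schur function, specialised to n variables y 0, ..., y (n-1).
Equality of symmetric functions = equality of these for all n and all values y in
all commutative rings.\<close>

definition skew_schur :: "nat \<Rightarrow> (nat \<Rightarrow> 'a::comm_ring_1) \<Rightarrow> nat list \<Rightarrow> nat list \<Rightarrow> 'a" where
  "skew_schur n y a b = (\<Sum>T\<in>ssyt n (cells a b). \<Prod>c\<in>cells a b. y (T c))"

end

theory Submission
  imports Defs
begin

(* A skew tableau of shape (alpha | beta) is encoded row by row as a list of weakly
   increasing words ("fillings"); consecutive rows i, i+1 overlapping in beta_i columns
   must be column-strict there.  All four skew Schur functions of the statement share the
   outer rows sigma and tau, so each of them is a sum over the fillings U of sigma and L
   of tau of wts U * wts L times a "local" two-row sum that only depends on the bounds
   imposed by U and L (row_floor U, row_ceiling n L).  The theorem thus reduces to an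
   identity between four local two-row sums (local_identity).  Each local sum is computed
   in closed form by a two-row Jacobi-Trudi / Lindstroem-Gessel-Viennot switching
   argument (strict_pairs_sum); one of them is reduced to another by the duality
   v |-> n - 1 - v which reverses rows. *)

definition Row :: "nat \<Rightarrow> nat \<Rightarrow> nat list set" where
  "Row n k = {w. length w = k \<and> sorted w \<and> (\<forall>v\<in>set w. v < n)}"

lemma Row_iff: "w \<in> Row n k \<longleftrightarrow> length w = k \<and> sorted w \<and> (\<forall>v\<in>set w. v < n)"
  by (simp add: Row_def)

lemma finite_Row: "finite (Row n k)"
  by (rule finite_subset[OF _ finite_lists_length_eq[of "{..<n}" k]]) (auto simp: Row_def)

lemma Row_bound: "w \<in> Row n k \<Longrightarrow> v \<in> set w \<Longrightarrow> v < n"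
  by (auto simp: Row_iff)

lemma Row_ne: "w \<in> Row n k \<Longrightarrow> 1 \<le> k \<Longrightarrow> w \<noteq> []"
  by (auto simp: Row_iff)

lemma Row_hd_bound: "w \<in> Row n k \<Longrightarrow> 1 \<le> k \<Longrightarrow> hd w < n"
  using Row_bound Row_ne hd_in_set by blast

lemma Row_last_bound: "w \<in> Row n k \<Longrightarrow> 1 \<le> k \<Longrightarrow> last w < n"
  using Row_bound Row_ne last_in_set by blast

lemma Row_nth_bound: "w \<in> Row n k \<Longrightarrow> j < k \<Longrightarrow> w!j < n"
  using Row_bound nth_mem by (metis Row_iff)

definition wt :: "(nat \<Rightarrow> 'a::comm_ring_1) \<Rightarrow> nat list \<Rightarrow> 'a" where
  "wt y w = prod_list (map y w)"

lemma wt_append[simp]: "wt y (xs @ ys) = wt y xs * wt y ys"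
  by (simp add: wt_def)

lemma wt_exchange: "wt y (take j B @ drop i A) * wt y (take i A @ drop j B) = wt y A * wt y B"
proof -
  have "wt y A = wt y (take i A) * wt y (drop i A)" "wt y B = wt y (take j B) * wt y (drop j B)"
    by (metis append_take_drop_id wt_append)+
  then show ?thesis by (simp add: ac_simps)
qed

lemma sorted_app: "sorted xs \<Longrightarrow> sorted ys \<Longrightarrow> (xs \<noteq> [] \<Longrightarrow> ys \<noteq> [] \<Longrightarrow> last xs \<le> hd ys)
   \<Longrightarrow> sorted (xs @ ys)"
  by (metis order.trans successively_append_iff successively_iff_sorted_wrt_strong)

lemma last_take_nth: "0 < j \<Longrightarrow> j \<le> length xs \<Longrightarrow> last (take j xs) = xs!(j-1)"
proof -
  assume j: "0 < j" "j \<le> length xs"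
  then have "last (take j xs) = take j xs ! (length (take j xs) - 1)" by (intro last_conv_nth) auto
  also have "\<dots> = xs!(j-1)" using j by (simp add: min_def)
  finally show ?thesis .
qed

definition shift_strict :: "nat \<Rightarrow> nat list \<Rightarrow> nat list \<Rightarrow> bool" where
  "shift_strict d A B = (\<forall>i. i < length A \<longrightarrow> i + d < length B \<longrightarrow> A!i < B!(i+d))"

definition first_clash :: "nat \<Rightarrow> nat list \<Rightarrow> nat list \<Rightarrow> nat" where
  "first_clash d A B = (LEAST i. i < length A \<and> i + d < length B \<and> B!(i+d) \<le> A!i)"

definition first_cross :: "nat \<Rightarrow> nat list \<Rightarrow> nat list \<Rightarrow> nat" where
  "first_cross d C D = (LEAST i. i < length D \<longrightarrow> C!(i+d) \<le> D!i)"

lemma first_clash_props: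
  assumes "\<not> shift_strict d A B"
  shows "first_clash d A B < length A" "first_clash d A B + d < length B"
    "B!(first_clash d A B + d) \<le> A!(first_clash d A B)"
    "\<And>t. t < first_clash d A B \<Longrightarrow> A!t < B!(t+d)"
proof -
  have ex: "\<exists>i. i < length A \<and> i + d < length B \<and> B!(i+d) \<le> A!i"
    using assms by (auto simp: shift_strict_def not_less)
  have 1: "first_clash d A B < length A \<and> first_clash d A B + d < length B
      \<and> B!(first_clash d A B + d) \<le> A!(first_clash d A B)"
    unfolding first_clash_def by (rule LeastI_ex[OF ex])
  then show "first_clash d A B < length A" "first_clash d A B + d < length B"
    "B!(first_clash d A B + d) \<le> A!(first_clash d A B)" by auto
  fix t assume t: "t < first_clash d A B"
  have "\<not> (t < length A \<and> t + d < length B \<and> B!(t+d) \<le> A!t)"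
    using not_less_Least[OF t[unfolded first_clash_def]] by blast
  then show "A!t < B!(t+d)" using t 1 by auto
qed

lemma first_cross_props:
  shows "first_cross d C D \<le> length D"
    "first_cross d C D < length D \<Longrightarrow> C!(first_cross d C D + d) \<le> D!(first_cross d C D)"
    "\<And>t. t < first_cross d C D \<Longrightarrow> D!t < C!(t+d)"
proof -
  show le: "first_cross d C D \<le> length D" unfolding first_cross_def by (rule Least_le) simp
  have "first_cross d C D < length D \<longrightarrow> C!(first_cross d C D + d) \<le> D!(first_cross d C D)"
    unfolding first_cross_def by (rule LeastI[of _ "length D"]) simp
  then show "first_cross d C D < length D \<Longrightarrow> C!(first_cross d C D + d) \<le> D!(first_cross d C D)"
    by blast
  fix t assume t: "t < first_cross d C D"
  have "\<not> (t < length D \<longrightarrow> C!(t+d) \<le> D!t)"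
    using not_less_Least[OF t[unfolded first_cross_def]] by blast
  then show "D!t < C!(t+d)" by auto
qed

definition switch_rows :: "nat \<Rightarrow> nat list \<times> nat list \<Rightarrow> nat list \<times> nat list" where
  "switch_rows d p = (let A = fst p; B = snd p; i = first_clash d A B in
     (take (i+d+1) B @ drop i A, take i A @ drop (i+d+1) B))"

definition unswitch_rows :: "nat \<Rightarrow> nat list \<times> nat list \<Rightarrow> nat list \<times> nat list" where
  "unswitch_rows d p = (let C = fst p; D = snd p; i = first_cross d C D in
     (take i D @ drop (i+d+1) C, take (i+d+1) C @ drop i D))"

lemma switch_rows_Row:
  assumes A: "A \<in> Row n k" and B: "B \<in> Row n l" and ns: "\<not> shift_strict d A B"
  defines "C \<equiv> fst (switch_rows d (A,B))" and "D \<equiv> snd (switch_rows d (A,B))"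
  shows "C \<in> Row n (k+d+1)" "D \<in> Row n (l-d-1)" "hd C = hd B" "last C = last A"
    "l = k + d + 1 \<Longrightarrow> last D = last B"
proof -
  define i where "i = first_clash d A B"
  have lA: "length A = k" and sA: "sorted A" and nA: "\<forall>v\<in>set A. v < n"
    and lB: "length B = l" and sB: "sorted B" and nB: "\<forall>v\<in>set B. v < n"
    using A B by (auto simp: Row_iff)
  have ik: "i < k" and idl: "i + d < l" and clash: "B!(i+d) \<le> A!i"
    and before: "\<And>t. t < i \<Longrightarrow> A!t < B!(t+d)"
    using first_clash_props[OF ns] lA lB unfolding i_def by auto
  have C_eq: "C = take (i+d+1) B @ drop i A" and D_eq: "D = take i A @ drop (i+d+1) B"
    by (simp_all add: C_def D_def switch_rows_def i_def Let_def)
  have "sorted C" unfolding C_eq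
  proof (rule sorted_app)
    show "last (take (i + d + 1) B) \<le> hd (drop i A)"
      using clash ik idl lA lB by (simp add: last_take_nth hd_drop_conv_nth)
  qed (use sA sB in \<open>simp_all add: sorted_wrt_take sorted_wrt_drop\<close>)
  moreover have "sorted D" unfolding D_eq
  proof (rule sorted_app)
    assume "take i A \<noteq> []" and "drop (i + d + 1) B \<noteq> []"
    then have i0: "0 < i" and il: "i + d + 1 < l" using lB by auto
    have "A!(i-1) < B!(i-1+d)" using before[of "i-1"] i0 by simp
    also have "\<dots> \<le> B!(i+d+1)" using sB il lB by (intro sorted_nth_mono) auto
    finally show "last (take i A) \<le> hd (drop (i + d + 1) B)"
      using i0 ik lA il lB by (simp add: last_take_nth hd_drop_conv_nth)
  qed (use sA sB in \<open>simp_all add: sorted_wrt_take sorted_wrt_drop\<close>)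
  moreover have "\<forall>v\<in>set C. v < n" "\<forall>v\<in>set D. v < n"
    using nA nB by (auto simp: C_eq D_eq dest: in_set_takeD in_set_dropD)
  moreover have "length C = k + d + 1" "length D = l - d - 1"
    using ik idl lA lB by (simp_all add: C_eq D_eq)
  ultimately show "C \<in> Row n (k+d+1)" "D \<in> Row n (l-d-1)" by (simp_all add: Row_iff)
  show "hd C = hd B" using idl lB by (cases B) (simp_all add: C_eq)
  show "last C = last A" using ik lA by (simp add: C_eq)
  show "last D = last B" if "l = k + d + 1" using that ik lB by (simp add: D_eq)
qed

lemma first_cross_switch:
  assumes A: "A \<in> Row n k" and B: "B \<in> Row n l" and ns: "\<not> shift_strict d A B"
  defines "C \<equiv> fst (switch_rows d (A,B))" and "D \<equiv> snd (switch_rows d (A,B))"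
  shows "first_cross d C D = first_clash d A B"
proof -
  define i where "i = first_clash d A B"
  have lA: "length A = k" and lB: "length B = l" and sB: "sorted B" using A B by (auto simp: Row_iff)
  have ik: "i < k" and idl: "i + d < l" and before: "\<And>t. t < i \<Longrightarrow> A!t < B!(t+d)"
    using first_clash_props[OF ns] lA lB unfolding i_def by auto
  have C_eq: "C = take (i+d+1) B @ drop i A" and D_eq: "D = take i A @ drop (i+d+1) B"
    by (simp_all add: C_def D_def switch_rows_def i_def Let_def)
  have lD: "length D = l - d - 1" using ik idl lA lB by (simp add: D_eq)
  show ?thesis unfolding first_cross_def i_def[symmetric]
  proof (rule Least_equality)
    show "i < length D \<longrightarrow> C ! (i + d) \<le> D ! i"
    proof
      assume "i < length D"
      then have il: "i + d + 1 < l" using lD idl by simp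
      have "C!(i+d) = B!(i+d)" using idl lB by (simp add: C_eq nth_append)
      also have "\<dots> \<le> B!(i+d+1)" using sB il lB by (intro sorted_nth_mono) auto
      also have "\<dots> = D!i" using ik lA il lB by (simp add: D_eq nth_append)
      finally show "C ! (i + d) \<le> D ! i" .
    qed
  next
    fix t assume h: "t < length D \<longrightarrow> C ! (t + d) \<le> D ! t"
    show "i \<le> t"
    proof (rule ccontr)
      assume "\<not> i \<le> t"
      then have ti: "t < i" by simp
      then have "D!t = A!t" "C!(t+d) = B!(t+d)" "t < length D"
        using ik lA idl lB lD by (simp_all add: C_eq D_eq nth_append)
      then show False using h before[OF ti] by simp
    qed
  qed
qed

lemma unswitch_switch:
  assumes "A \<in> Row n k" and "B \<in> Row n l" and ns: "\<not> shift_strict d A B"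
  shows "unswitch_rows d (switch_rows d (A,B)) = (A,B)"
proof -
  define i where "i = first_clash d A B"
  have "i < length A" "i + d < length B" using first_clash_props[OF ns] unfolding i_def by auto
  then show ?thesis
    using first_cross_switch[OF assms]
    by (simp add: unswitch_rows_def switch_rows_def Let_def i_def[symmetric])
qed

lemma unswitch_rows_Row:
  assumes C: "C \<in> Row n (k+d+1)" and D: "D \<in> Row n (l-d-1)" and dl: "d < l"
    and ik: "first_cross d C D < k"
  defines "A \<equiv> fst (unswitch_rows d (C,D))" and "B \<equiv> snd (unswitch_rows d (C,D))"
  shows "A \<in> Row n k" "B \<in> Row n l" "\<not> shift_strict d A B" "hd B = hd C" "last A = last C"
    "first_cross d C D < length D \<Longrightarrow> last B = last D"
proof -
  define i where "i = first_cross d C D"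
  have lC: "length C = k+d+1" and sC: "sorted C" and nC: "\<forall>v\<in>set C. v < n"
    and lD: "length D = l-d-1" and sD: "sorted D" and nD: "\<forall>v\<in>set D. v < n"
    using C D by (auto simp: Row_iff)
  have il: "i \<le> length D" and cross: "i < length D \<Longrightarrow> C!(i+d) \<le> D!i"
    and before: "\<And>t. t < i \<Longrightarrow> D!t < C!(t+d)"
    using first_cross_props[where d=d and C=C and D=D] unfolding i_def by auto
  have ik: "i < k" using ik i_def by simp
  have A_eq: "A = take i D @ drop (i+d+1) C" and B_eq: "B = take (i+d+1) C @ drop i D"
    by (simp_all add: A_def B_def unswitch_rows_def i_def Let_def)
  have "sorted A" unfolding A_eq
  proof (rule sorted_app)
    assume "take i D \<noteq> []" "drop (i + d + 1) C \<noteq> []"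
    then have i0: "0 < i" by auto
    have "D!(i-1) < C!(i-1+d)" using before[of "i-1"] i0 by simp
    also have "\<dots> \<le> C!(i+d+1)" using sC ik lC by (intro sorted_nth_mono) auto
    finally show "last (take i D) \<le> hd (drop (i + d + 1) C)"
      using i0 il ik lC by (simp add: last_take_nth hd_drop_conv_nth)
  qed (use sC sD in \<open>simp_all add: sorted_wrt_take sorted_wrt_drop\<close>)
  moreover have "sorted B" unfolding B_eq
  proof (rule sorted_app)
    assume "take (i+d+1) C \<noteq> []" and "drop i D \<noteq> []"
    then have iD: "i < length D" by auto
    show "last (take (i+d+1) C) \<le> hd (drop i D)"
      using cross[OF iD] iD ik lC by (simp add: last_take_nth hd_drop_conv_nth)
  qed (use sC sD in \<open>simp_all add: sorted_wrt_take sorted_wrt_drop\<close>)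
  moreover have "\<forall>v\<in>set A. v < n" "\<forall>v\<in>set B. v < n"
    using nC nD by (auto simp: A_eq B_eq dest: in_set_takeD in_set_dropD)
  moreover have lA: "length A = k" and lB: "length B = l"
    using ik il lC lD dl by (simp_all add: A_eq B_eq)
  ultimately show "A \<in> Row n k" "B \<in> Row n l" by (simp_all add: Row_iff)
  have "B!(i+d) = C!(i+d)" "A!i = C!(i+d+1)" using il ik lC by (simp_all add: A_eq B_eq nth_append)
  then have "B!(i+d) \<le> A!i" using sC ik lC by (simp add: sorted_nth_mono)
  then show "\<not> shift_strict d A B" using ik lA il lD lB dl unfolding shift_strict_def
    by (auto intro!: exI[of _ i])
  show "hd B = hd C" using lC by (cases C) (simp_all add: B_eq)
  show "last A = last C" using ik lC by (simp add: A_eq)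
  show "last B = last D" if "first_cross d C D < length D" using that by (simp add: B_eq i_def)
qed

lemma first_clash_unswitch:
  assumes C: "C \<in> Row n (k+d+1)" and D: "D \<in> Row n (l-d-1)" and dl: "d < l"
    and ik: "first_cross d C D < k"
  defines "A \<equiv> fst (unswitch_rows d (C,D))" and "B \<equiv> snd (unswitch_rows d (C,D))"
  shows "first_clash d A B = first_cross d C D"
proof -
  define i where "i = first_cross d C D"
  have lC: "length C = k+d+1" and sC: "sorted C" and lD: "length D = l-d-1"
    using C D by (auto simp: Row_iff)
  have il: "i \<le> length D" and before: "\<And>t. t < i \<Longrightarrow> D!t < C!(t+d)"
    using first_cross_props[where d=d and C=C and D=D] unfolding i_def by auto
  have ik: "i < k" using ik i_def by simp
  have A_eq: "A = take i D @ drop (i+d+1) C" and B_eq: "B = take (i+d+1) C @ drop i D"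
    by (simp_all add: A_def B_def unswitch_rows_def i_def Let_def)
  have lA: "length A = k" and lB: "length B = l" using ik il lC lD dl by (simp_all add: A_eq B_eq)
  have "B!(i+d) = C!(i+d)" "A!i = C!(i+d+1)" using il ik lC by (simp_all add: A_eq B_eq nth_append)
  then have clash: "B!(i+d) \<le> A!i" using sC ik lC by (simp add: sorted_nth_mono)
  show ?thesis unfolding first_clash_def i_def[symmetric]
  proof (rule Least_equality)
    show "i < length A \<and> i + d < length B \<and> B ! (i + d) \<le> A ! i"
      using ik lA il lD lB dl clash by simp
  next
    fix t assume h: "t < length A \<and> t + d < length B \<and> B ! (t + d) \<le> A ! t"
    show "i \<le> t"
    proof (rule ccontr)
      assume "\<not> i \<le> t"
      then have ti: "t < i" by simp
      then have "A!t = D!t" "B!(t+d) = C!(t+d)" using il ik lC by (simp_all add: A_eq B_eq nth_append)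
      then show False using h before[OF ti] by simp
    qed
  qed
qed

lemma switch_unswitch:
  assumes C: "C \<in> Row n (k+d+1)" and D: "D \<in> Row n (l-d-1)" and dl: "d < l"
    and ik: "first_cross d C D < k"
  shows "switch_rows d (unswitch_rows d (C,D)) = (C,D)"
proof -
  define i where "i = first_cross d C D"
  have "i \<le> length D" "length C = k+d+1" using C first_cross_props(1)[where d=d and C=C and D=D] by (auto simp: Row_iff i_def)
  then show ?thesis
    using first_clash_unswitch[OF assms] ik
    by (simp add: unswitch_rows_def switch_rows_def Let_def i_def[symmetric])
qed

lemma first_cross_less:
  assumes C: "C \<in> Row n (k+d+1)" and D: "D \<in> Row n (l-d-1)" and k: "1 \<le> k"
    and H: "l \<le> k + d \<or> (l = k + d + 1 \<and> last C < last D)"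
  shows "first_cross d C D < k"
proof -
  define i where "i = first_cross d C D"
  have lC: "length C = k+d+1" and sC: "sorted C" and lD: "length D = l-d-1"
    using C D by (auto simp: Row_iff)
  have il: "i \<le> length D" and before: "\<And>t. t < i \<Longrightarrow> D!t < C!(t+d)"
    using first_cross_props[where d=d and C=C and D=D] unfolding i_def by auto
  from H show ?thesis unfolding i_def[symmetric]
  proof
    assume "l \<le> k + d" then show "i < k" using il lD k by linarith
  next
    assume h: "l = k + d + 1 \<and> last C < last D"
    show "i < k"
    proof (rule ccontr)
      assume "\<not> i < k"
      then have "i = k" using il lD h by simp
      then have "D!(k-1) < C!(k-1+d)" using before[of "k-1"] k by simp
      also have "\<dots> \<le> C!(k+d)" using sC lC by (intro sorted_nth_mono) auto
      also have "C!(k+d) = last C" using lC by (subst last_conv_nth) auto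
      moreover have "last D = D!(k-1)" using lD h k by (subst last_conv_nth) auto
      ultimately show False using h by simp
    qed
  qed
qed

(* The
   predicates la, fb, lb on last A, hd B, last B describe boundary conditions coming from
   neighbouring rows; H ensures that they are transported correctly. *)
lemma switch_rows_bij:
  fixes la fb lb :: "nat \<Rightarrow> bool" and y :: "nat \<Rightarrow> 'a::comm_ring_1"
  assumes k: "1 \<le> k" and dl: "d < l"
    and H: "(l \<le> k + d \<and> (\<forall>v. lb v)) \<or> (l = k + d + 1 \<and> (\<forall>u v. la u \<longrightarrow> lb v \<longrightarrow> u < v))"
  shows "(\<Sum>p\<in>{(A,B). A \<in> Row n k \<and> B \<in> Row n l \<and> la (last A) \<and> fb (hd B) \<and> lb (last B)
              \<and> \<not> shift_strict d A B}. wt y (fst p) * wt y (snd p))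
       = (\<Sum>p\<in>{(C,D). C \<in> Row n (k+d+1) \<and> D \<in> Row n (l-d-1) \<and> fb (hd C) \<and> la (last C)
              \<and> lb (last D)}. wt y (fst p) * wt y (snd p))"
proof (rule sum.reindex_bij_witness[where i="unswitch_rows d" and j="switch_rows d"])
  fix p
  assume "p \<in> {(A,B). A \<in> Row n k \<and> B \<in> Row n l \<and> la (last A) \<and> fb (hd B) \<and> lb (last B)
              \<and> \<not> shift_strict d A B}"
  then obtain A B where p: "p = (A,B)" and A: "A \<in> Row n k" and B: "B \<in> Row n l"
    and bd: "la (last A)" "fb (hd B)" "lb (last B)" and ns: "\<not> shift_strict d A B" by auto
  note sw = switch_rows_Row[OF A B ns]
  have "lb (last (snd (switch_rows d (A,B))))" using H sw(5) bd by auto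
  then show "switch_rows d p \<in> {(C,D). C \<in> Row n (k+d+1) \<and> D \<in> Row n (l-d-1) \<and> fb (hd C)
              \<and> la (last C) \<and> lb (last D)}"
    using sw bd p by (auto simp: case_prod_beta)
  show "unswitch_rows d (switch_rows d p) = p" using unswitch_switch[OF A B ns] p by simp
  show "wt y (fst (switch_rows d p)) * wt y (snd (switch_rows d p)) = wt y (fst p) * wt y (snd p)"
    using p by (simp add: switch_rows_def Let_def wt_exchange del: wt_append)
next
  fix p
  assume "p \<in> {(C,D). C \<in> Row n (k+d+1) \<and> D \<in> Row n (l-d-1) \<and> fb (hd C) \<and> la (last C)
              \<and> lb (last D)}"
  then obtain C D where p: "p = (C,D)" and C: "C \<in> Row n (k+d+1)" and D: "D \<in> Row n (l-d-1)"
    and bd: "fb (hd C)" "la (last C)" "lb (last D)" by auto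
  have lD: "length D = l - d - 1" using D by (simp add: Row_iff)
  have ik: "first_cross d C D < k"
    using first_cross_less[OF C D k] H bd by auto
  note us = unswitch_rows_Row[OF C D dl ik]
  have "lb (last (snd (unswitch_rows d (C,D))))"
  proof (cases "first_cross d C D < length D")
    case True then show ?thesis using us(6) bd by simp
  next
    case False then show ?thesis using H ik lD by auto
  qed
  then show "unswitch_rows d p \<in> {(A,B). A \<in> Row n k \<and> B \<in> Row n l \<and> la (last A) \<and> fb (hd B)
              \<and> lb (last B) \<and> \<not> shift_strict d A B}"
    using us bd p by (auto simp: case_prod_beta)
  show "switch_rows d (unswitch_rows d p) = p" using switch_unswitch[OF C D dl ik] p by simp
qed

definition row_sum :: "nat \<Rightarrow> (nat \<Rightarrow> 'a::comm_ring_1) \<Rightarrow> nat \<Rightarrow> (nat list \<Rightarrow> bool) \<Rightarrow> 'a" where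
  "row_sum n y k P = (\<Sum>w\<in>{w\<in>Row n k. P w}. wt y w)"

lemma row_sum_cong: "(\<And>w. w \<in> Row n k \<Longrightarrow> P w = Q w) \<Longrightarrow> row_sum n y k P = row_sum n y k Q"
  unfolding row_sum_def by (rule sum.cong) auto

lemma row_sum_split: "row_sum n y k P = row_sum n y k (\<lambda>w. P w \<and> Q w) + row_sum n y k (\<lambda>w. P w \<and> \<not> Q w)"
proof -
  have "{w\<in>Row n k. P w} = {w\<in>Row n k. P w \<and> Q w} \<union> {w\<in>Row n k. P w \<and> \<not> Q w}" by auto
  moreover have "finite {w\<in>Row n k. P w \<and> Q w}" "finite {w\<in>Row n k. P w \<and> \<not> Q w}"
    using finite_Row by auto
  ultimately show ?thesis unfolding row_sum_def by (subst sum.union_disjoint[symmetric]) auto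
qed

lemma pair_sum_product:
  "(\<Sum>p\<in>{(A,B). A \<in> Row n k \<and> B \<in> Row n l \<and> P A \<and> Q B}. wt y (fst p) * wt y (snd p))
    = row_sum n y k P * row_sum n y l Q"
proof -
  have "{(A,B). A \<in> Row n k \<and> B \<in> Row n l \<and> P A \<and> Q B} = {A\<in>Row n k. P A} \<times> {B\<in>Row n l. Q B}"
    by auto
  then show ?thesis
    by (simp add: row_sum_def sum_product sum.cartesian_product case_prod_beta)
qed

lemma finite_pairs: "finite {(A,B). A \<in> Row n k \<and> B \<in> Row n l \<and> R A B}"
  by (rule finite_subset[OF _ finite_cartesian_product[OF finite_Row[of n k] finite_Row[of n l]]]) auto

lemma strict_pairs_sum:
  fixes la fb lb :: "nat \<Rightarrow> bool" and y :: "nat \<Rightarrow> 'a::comm_ring_1"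
  assumes k: "1 \<le> k" and dl: "d < l"
    and H: "(l \<le> k + d \<and> (\<forall>v. lb v)) \<or> (l = k + d + 1 \<and> (\<forall>u v. la u \<longrightarrow> lb v \<longrightarrow> u < v))"
  shows "(\<Sum>p\<in>{(A,B). A \<in> Row n k \<and> B \<in> Row n l \<and> la (last A) \<and> fb (hd B) \<and> lb (last B)
              \<and> shift_strict d A B}. wt y (fst p) * wt y (snd p))
       = row_sum n y k (\<lambda>A. la (last A)) * row_sum n y l (\<lambda>B. fb (hd B) \<and> lb (last B))
         - row_sum n y (k+d+1) (\<lambda>C. fb (hd C) \<and> la (last C)) * row_sum n y (l-d-1) (\<lambda>D. lb (last D))"
proof -
  let ?f = "\<lambda>p. wt y (fst p) * wt y (snd p)"
  let ?S = "{(A,B). A \<in> Row n k \<and> B \<in> Row n l \<and> la (last A) \<and> fb (hd B) \<and> lb (last B)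
              \<and> shift_strict d A B}"
  let ?V = "{(A,B). A \<in> Row n k \<and> B \<in> Row n l \<and> la (last A) \<and> fb (hd B) \<and> lb (last B)
              \<and> \<not> shift_strict d A B}"
  let ?All = "{(A,B). A \<in> Row n k \<and> B \<in> Row n l \<and> la (last A) \<and> (fb (hd B) \<and> lb (last B))}"
  have "?All = ?S \<union> ?V" "?S \<inter> ?V = {}" by auto
  then have "sum ?f ?All = sum ?f ?S + sum ?f ?V"
    by (simp add: sum.union_disjoint finite_pairs)
  moreover have "sum ?f ?All = row_sum n y k (\<lambda>A. la (last A)) * row_sum n y l (\<lambda>B. fb (hd B) \<and> lb (last B))"
    by (rule pair_sum_product)
  moreover have "sum ?f ?V = row_sum n y (k+d+1) (\<lambda>C. fb (hd C) \<and> la (last C))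
      * row_sum n y (l-d-1) (\<lambda>D. lb (last D))"
    unfolding switch_rows_bij[OF k dl H] by (subst pair_sum_product[symmetric]) (rule sum.cong; auto)
  ultimately show ?thesis by (simp add: algebra_simps)
qed

lemma double_sum_pairs:
  assumes "finite S" and "finite T"
  shows "(\<Sum>a\<in>S. \<Sum>b\<in>T. if c a b then f a b else 0)
     = (\<Sum>p\<in>{(a,b). a\<in>S \<and> b\<in>T \<and> c a b}. f (fst p) (snd p))"
proof -
  have "(\<Sum>a\<in>S. \<Sum>b\<in>T. if c a b then f a b else 0)
      = (\<Sum>p\<in>S\<times>T. if c (fst p) (snd p) then f (fst p) (snd p) else 0)"
    by (simp add: sum.cartesian_product case_prod_beta)
  also have "\<dots> = (\<Sum>p\<in>{p\<in>S\<times>T. c (fst p) (snd p)}. f (fst p) (snd p))"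
    using assms by (simp add: sum.inter_filter)
  also have "{p\<in>S\<times>T. c (fst p) (snd p)} = {(a,b). a\<in>S \<and> b\<in>T \<and> c a b}" by auto
  finally show ?thesis .
qed

(* Column-strictness of row r above row r' when they share the last c columns of r'
   with the first c columns of r (overlap c in the skew diagram). *)
definition compat :: "nat list \<Rightarrow> nat list \<Rightarrow> nat \<Rightarrow> bool" where
  "compat r r' c = (\<forall>j<c. r!j < r'!(length r' - c + j))"

lemma compat_shift_strict:
  assumes "c \<le> length r" and "c \<le> length r'"
  shows "compat r r' c = shift_strict (length r' - c) r r'"
proof -
  have "i + (length r' - c) < length r' \<longleftrightarrow> i < c" for i using assms by arith
  then show ?thesis unfolding compat_def shift_strict_def using assms by (auto simp: add.commute)
qed

(* The local two-row sum for two consecutive rows of lengths k and l overlapping in x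
   columns: the top row P must end at least at low (imposed by the row above it) and the
   bottom row Q must start below high (imposed by the row below it). *)
definition adj_pair :: "nat \<Rightarrow> (nat \<Rightarrow> 'a::comm_ring_1) \<Rightarrow> nat \<Rightarrow> nat \<Rightarrow> nat \<Rightarrow> nat \<Rightarrow> nat \<Rightarrow> 'a" where
  "adj_pair n y k l x low high = (\<Sum>P\<in>Row n k. \<Sum>Q\<in>Row n l.
     if low \<le> last P \<and> compat P Q x \<and> hd Q < high then wt y P * wt y Q else 0)"

(* The local sum when the first row is merged into the last row of sigma: E is the part of
   the merged row lying below the next row P. *)
definition merge_left :: "nat \<Rightarrow> (nat \<Rightarrow> 'a::comm_ring_1) \<Rightarrow> nat \<Rightarrow> nat \<Rightarrow> nat \<Rightarrow> 'a" where
  "merge_left n y m low high = (\<Sum>E\<in>Row n m. \<Sum>P\<in>Row n (m+1).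
     if last E < low \<and> (\<forall>j<m. E!j < P!j) \<and> low \<le> last P \<and> hd P < high then wt y E * wt y P else 0)"

(* The local sum when the second row is merged into the first row of tau: X is the part of
   the merged row lying below the row P. *)
definition merge_right :: "nat \<Rightarrow> (nat \<Rightarrow> 'a::comm_ring_1) \<Rightarrow> nat \<Rightarrow> nat \<Rightarrow> nat \<Rightarrow> 'a" where
  "merge_right n y m low high = (\<Sum>P\<in>Row n (m+1). \<Sum>X\<in>Row n m.
     if high \<le> hd X \<and> (\<forall>j<m. P!(Suc j) < X!j) \<and> low \<le> last P \<and> hd P < high then wt y P * wt y X else 0)"

(* Closed form of adj_pair: x columns of overlap amount to shifted strictness with shift
   l - x, so strict_pairs_sum applies. *)
lemma adj_pair_formula:
  assumes k: "1 \<le> k" and xk: "x \<le> k" and xl: "x \<le> l"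
  shows "adj_pair n y k l x low high = row_sum n y k (\<lambda>P. low \<le> last P) * row_sum n y l (\<lambda>Q. hd Q < high)
     - (if x = 0 then 0
        else row_sum n y (k + (l - x) + 1) (\<lambda>C. hd C < high \<and> low \<le> last C) * row_sum n y (x - 1) (\<lambda>D. True))"
proof -
  have "adj_pair n y k l x low high = (\<Sum>p\<in>{(A,B). A \<in> Row n k \<and> B \<in> Row n l
      \<and> (low \<le> last A \<and> compat A B x \<and> hd B < high)}. wt y (fst p) * wt y (snd p))"
    unfolding adj_pair_def by (rule double_sum_pairs[OF finite_Row finite_Row])
  also have "\<dots> = (\<Sum>p\<in>{(A,B). A \<in> Row n k \<and> B \<in> Row n l \<and> (\<lambda>v. low \<le> v) (last A)
      \<and> (\<lambda>v. v < high) (hd B) \<and> (\<lambda>v. True) (last B) \<and> shift_strict (l - x) A B}.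
      wt y (fst p) * wt y (snd p))"
    using xk xl by (intro sum.cong refl) (auto simp: compat_shift_strict Row_iff)
  finally have eq: "adj_pair n y k l x low high = \<dots>" .
  show ?thesis
  proof (cases "x = 0")
    case True
    have "adj_pair n y k l x low high = (\<Sum>p\<in>{(A,B). A \<in> Row n k \<and> B \<in> Row n l
        \<and> low \<le> last A \<and> hd B < high}. wt y (fst p) * wt y (snd p))"
      unfolding eq using True by (intro sum.cong refl) (auto simp: shift_strict_def Row_iff)
    then show ?thesis using True by (simp add: pair_sum_product)
  next
    case False
    then have "l - (l - x) - 1 = x - 1" using xl by simp
    moreover have "adj_pair n y k l x low high
      = row_sum n y k (\<lambda>A. (\<lambda>v. low \<le> v) (last A)) * row_sum n y l (\<lambda>B. (\<lambda>v. v < high) (hd B) \<and> (\<lambda>v. True) (last B))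
        - row_sum n y (k + (l - x) + 1) (\<lambda>C. (\<lambda>v. v < high) (hd C) \<and> (\<lambda>v. low \<le> v) (last C))
          * row_sum n y (l - (l - x) - 1) (\<lambda>D. (\<lambda>v. True) (last D))"
      unfolding eq using k xk xl False by (intro strict_pairs_sum) auto
    ultimately show ?thesis using False by simp
  qed
qed

(* Closed form of merge_left: column-strictness with shift 0. *)
lemma merge_left_formula:
  assumes m: "1 \<le> m"
  shows "merge_left n y m low high
     = row_sum n y m (\<lambda>A. last A < low) * row_sum n y (m+1) (\<lambda>B. hd B < high \<and> low \<le> last B)
       - row_sum n y (m+1) (\<lambda>C. hd C < high \<and> last C < low) * row_sum n y m (\<lambda>D. low \<le> last D)"
proof -
  have "merge_left n y m low high = (\<Sum>p\<in>{(A,B). A \<in> Row n m \<and> B \<in> Row n (m+1)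
      \<and> (last A < low \<and> (\<forall>j<m. A!j < B!j) \<and> low \<le> last B \<and> hd B < high)}. wt y (fst p) * wt y (snd p))"
    unfolding merge_left_def by (rule double_sum_pairs[OF finite_Row finite_Row])
  also have "\<dots> = (\<Sum>p\<in>{(A,B). A \<in> Row n m \<and> B \<in> Row n (m+1) \<and> (\<lambda>v. v < low) (last A)
      \<and> (\<lambda>v. v < high) (hd B) \<and> (\<lambda>v. low \<le> v) (last B) \<and> shift_strict 0 A B}. wt y (fst p) * wt y (snd p))"
    by (intro sum.cong refl) (auto simp: shift_strict_def Row_iff)
  also have "\<dots> = row_sum n y m (\<lambda>A. (\<lambda>v. v < low) (last A))
      * row_sum n y (m+1) (\<lambda>B. (\<lambda>v. v < high) (hd B) \<and> (\<lambda>v. low \<le> v) (last B))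
      - row_sum n y (m+0+1) (\<lambda>C. (\<lambda>v. v < high) (hd C) \<and> (\<lambda>v. v < low) (last C))
      * row_sum n y (m+1-0-1) (\<lambda>D. (\<lambda>v. low \<le> v) (last D))"
    using m by (intro strict_pairs_sum) auto
  finally show ?thesis by simp
qed

definition dual :: "nat \<Rightarrow> nat list \<Rightarrow> nat list" where
  "dual n w = rev (map (\<lambda>v. n - Suc v) w)"

lemma dual_length[simp]: "length (dual n w) = length w" by (simp add: dual_def)

lemma dual_nth: "j < length w \<Longrightarrow> dual n w ! j = n - Suc (w ! (length w - Suc j))"
  by (simp add: dual_def rev_nth)

lemma dual_hd: "w \<noteq> [] \<Longrightarrow> hd (dual n w) = n - Suc (last w)"
  by (simp add: dual_def hd_rev last_map)

lemma dual_last: "w \<noteq> [] \<Longrightarrow> last (dual n w) = n - Suc (hd w)"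
  by (simp add: dual_def last_rev hd_map)

lemma dual_dual: "\<forall>v\<in>set w. v < n \<Longrightarrow> dual n (dual n w) = w"
  by (induction w) (auto simp: dual_def rev_map)

lemma dual_Row: "w \<in> Row n k \<Longrightarrow> dual n w \<in> Row n k"
proof -
  assume w: "w \<in> Row n k"
  then have l: "length w = k" and s: "sorted w" and b: "\<forall>v\<in>set w. v < n" by (auto simp: Row_iff)
  have "sorted (dual n w)" unfolding sorted_iff_nth_mono
  proof (intro allI impI)
    fix i j assume ij: "i \<le> j" "j < length (dual n w)"
    then have "w ! (length w - Suc j) \<le> w ! (length w - Suc i)"
      using s by (intro sorted_nth_mono) auto
    then show "dual n w ! i \<le> dual n w ! j" using ij by (simp add: dual_nth)
  qed
  moreover have "\<forall>v\<in>set (dual n w). v < n" using b by (auto simp: dual_def)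
  ultimately show ?thesis using l by (simp add: Row_iff)
qed

lemma dual_bij: "bij_betw (dual n) (Row n k) (Row n k)"
proof -
  have "\<forall>w\<in>Row n k. dual n (dual n w) = w" using dual_dual Row_bound by blast
  moreover have "dual n ` Row n k \<subseteq> Row n k" using dual_Row by blast
  ultimately show ?thesis by (intro bij_betw_byWitness[where f'="dual n"])
qed

lemma wt_dual: "wt y (dual n w) = wt (\<lambda>v. y (n - Suc v)) w"
  by (simp add: wt_def dual_def rev_map[symmetric] comp_def)

lemma row_sum_dual: "row_sum n (\<lambda>v. y (n - Suc v)) k P = row_sum n y k (\<lambda>w. P (dual n w))"
proof -
  have "row_sum n y k (\<lambda>w. P (dual n w)) = (\<Sum>w\<in>Row n k. if P (dual n w) then wt y w else 0)"
    by (simp add: row_sum_def sum.inter_filter[OF finite_Row])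
  also have "\<dots> = (\<Sum>w\<in>Row n k. if P (dual n (dual n w)) then wt y (dual n w) else 0)"
    by (rule sum.reindex_bij_betw[OF dual_bij, symmetric])
  also have "\<dots> = (\<Sum>w\<in>Row n k. if P w then wt (\<lambda>v. y (n - Suc v)) w else 0)"
    by (intro sum.cong refl) (auto simp: dual_dual wt_dual Row_iff)
  also have "\<dots> = row_sum n (\<lambda>v. y (n - Suc v)) k P"
    by (simp add: row_sum_def sum.inter_filter[OF finite_Row])
  finally show ?thesis by simp
qed

lemma dual_last_less: "w \<in> Row n k \<Longrightarrow> 1 \<le> k \<Longrightarrow> (last (dual n w) < n - t) = (t \<le> hd w)"
  using Row_ne[of w n k] Row_hd_bound[of w n k] by (simp add: dual_last) linarith

lemma dual_last_ge: "w \<in> Row n k \<Longrightarrow> 1 \<le> k \<Longrightarrow> (n - t \<le> last (dual n w)) = (hd w < t)"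
  using Row_ne[of w n k] Row_hd_bound[of w n k] by (simp add: dual_last) linarith

lemma dual_hd_less: "w \<in> Row n k \<Longrightarrow> 1 \<le> k \<Longrightarrow> (hd (dual n w) < n - t) = (t \<le> last w)"
  using Row_ne[of w n k] Row_hd_bound[of w n k] Row_last_bound[of w n k] by (simp add: dual_hd) linarith

lemma all_less_reverse: "(\<forall>j<m. Q (m - Suc j)) \<longleftrightarrow> (\<forall>j<m. Q j)"
proof
  assume h: "\<forall>j<m. Q (m - Suc j)"
  show "\<forall>j<m. Q j"
  proof (intro allI impI)
    fix j assume "j < m"
    then have "m - Suc (m - Suc j) = j" "m - Suc j < m" by auto
    then show "Q j" using h by metis
  qed
next
  assume "\<forall>j<m. Q j" then show "\<forall>j<m. Q (m - Suc j)" by simp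
qed

lemma merge_conditions_dual:
  assumes m: "1 \<le> m" and E: "E \<in> Row n m" and P: "P \<in> Row n (m+1)"
  shows "(high \<le> hd (dual n E) \<and> (\<forall>j<m. dual n P ! Suc j < dual n E ! j)
          \<and> low \<le> last (dual n P) \<and> hd (dual n P) < high)
     \<longleftrightarrow> (last E < n - high \<and> (\<forall>j<m. E!j < P!j) \<and> n - high \<le> last P \<and> hd P < n - low)"
proof -
  have lE: "length E = m" and lP: "length P = Suc m" using E P by (auto simp: Row_iff)
  have "(\<forall>j<m. dual n P ! Suc j < dual n E ! j) \<longleftrightarrow> (\<forall>j<m. E!(m - Suc j) < P!(m - Suc j))"
  proof -
    have "dual n P ! Suc j < dual n E ! j \<longleftrightarrow> E!(m - Suc j) < P!(m - Suc j)" if j: "j < m" for j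
    proof -
      have "E!(m - Suc j) < n" "P!(m - Suc j) < n" using E P j by (auto intro: Row_nth_bound)
      then show ?thesis using j lE lP by (simp add: dual_nth) arith
    qed
    then show ?thesis by auto
  qed
  moreover have "low \<le> last (dual n P) \<longleftrightarrow> hd P < n - low"
    using Row_ne[OF P] Row_hd_bound[OF P] by (simp add: dual_last) arith
  moreover have "hd (dual n P) < high \<longleftrightarrow> n - high \<le> last P"
    using Row_ne[OF P] Row_last_bound[OF P] by (simp add: dual_hd) arith
  moreover have "high \<le> hd (dual n E) \<longleftrightarrow> last E < n - high"
    using Row_ne[OF E m] Row_last_bound[OF E m] by (simp add: dual_hd) arith
  ultimately show ?thesis using all_less_reverse[of m "\<lambda>j. E!j < P!j"] by auto
qed

lemma merge_right_dual:
  assumes m: "1 \<le> m"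
  shows "merge_right n y m low high = merge_left n (\<lambda>v. y (n - Suc v)) m (n - high) (n - low)"
proof -
  let ?y' = "\<lambda>v. y (n - Suc v)"
  define f where "f P X = (if high \<le> hd X \<and> (\<forall>j<m. P!(Suc j) < X!j) \<and> low \<le> last P \<and> hd P < high
    then wt y P * wt y X else 0)" for P X
  have "merge_right n y m low high = (\<Sum>P\<in>Row n (m+1). \<Sum>E\<in>Row n m. f P E)"
    by (simp add: merge_right_def f_def)
  also have "\<dots> = (\<Sum>P\<in>Row n (m+1). \<Sum>E\<in>Row n m. f P (dual n E))"
    by (rule sum.cong[OF refl], rule sum.reindex_bij_betw[OF dual_bij, symmetric])
  also have "\<dots> = (\<Sum>P\<in>Row n (m+1). \<Sum>E\<in>Row n m. f (dual n P) (dual n E))"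
    by (rule sum.reindex_bij_betw[OF dual_bij, where g="\<lambda>P. \<Sum>E\<in>Row n m. f P (dual n E)", symmetric])
  also have "\<dots> = (\<Sum>P\<in>Row n (m+1). \<Sum>E\<in>Row n m. if last E < n - high \<and> (\<forall>j<m. E!j < P!j)
      \<and> n - high \<le> last P \<and> hd P < n - low then wt ?y' E * wt ?y' P else 0)"
  proof (intro sum.cong refl)
    fix P E assume "P \<in> Row n (m+1)" and "E \<in> Row n m"
    with merge_conditions_dual[OF m] show "f (dual n P) (dual n E) = (if last E < n - high
      \<and> (\<forall>j<m. E!j < P!j) \<and> n - high \<le> last P \<and> hd P < n - low then wt ?y' E * wt ?y' P else 0)"
      by (auto simp: f_def wt_dual mult.commute)
  qed
  also have "\<dots> = merge_left n ?y' m (n - high) (n - low)"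
    unfolding merge_left_def by (rule sum.swap)
  finally show ?thesis .
qed

(* Closed form of merge_right, obtained from merge_left by duality. *)
lemma merge_right_formula:
  assumes m: "1 \<le> m"
  shows "merge_right n y m low high
     = row_sum n y m (\<lambda>P. high \<le> hd P) * row_sum n y (m+1) (\<lambda>P. hd P < high \<and> low \<le> last P)
       - row_sum n y (m+1) (\<lambda>P. low \<le> last P \<and> high \<le> hd P) * row_sum n y m (\<lambda>P. hd P < high)"
proof -
  let ?y' = "\<lambda>v. y (n - Suc v)"
  have "merge_right n y m low high
     = row_sum n ?y' m (\<lambda>A. last A < n - high) * row_sum n ?y' (m+1) (\<lambda>B. hd B < n - low \<and> n - high \<le> last B)
       - row_sum n ?y' (m+1) (\<lambda>C. hd C < n - low \<and> last C < n - high) * row_sum n ?y' m (\<lambda>D. n - high \<le> last D)"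
    unfolding merge_right_dual[OF m] merge_left_formula[OF m] ..
  also have "\<dots> = row_sum n y m (\<lambda>P. high \<le> hd P) * row_sum n y (m+1) (\<lambda>P. hd P < high \<and> low \<le> last P)
       - row_sum n y (m+1) (\<lambda>P. low \<le> last P \<and> high \<le> hd P) * row_sum n y m (\<lambda>P. hd P < high)"
    unfolding row_sum_dual using m
    by (intro arg_cong2[where f="(-)"] arg_cong2[where f="(*)"] row_sum_cong)
       (simp_all add: dual_last_less dual_last_ge dual_hd_less conj_commute)
  finally show ?thesis .
qed

(* All four sums are expanded by the Jacobi-Trudi formulas; the result follows from
   splitting row sums according to the boundary conditions. *)
lemma local_identity:
  assumes m: "1 \<le> m" and x: "x \<le> m"
  shows "adj_pair n y m (m+1) x low high - adj_pair n y (m+1) m x low high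
       = merge_right n y m low high - merge_left n y m low high"
proof -
  define a1 where "a1 = row_sum n y m (\<lambda>P. low \<le> last P)"
  define a0 where "a0 = row_sum n y m (\<lambda>P. last P < low)"
  define b where "b = row_sum n y m (\<lambda>P. hd P < high)"
  define z where "z = row_sum n y m (\<lambda>P. high \<le> hd P)"
  define g where "g = row_sum n y (m+1) (\<lambda>P. hd P < high \<and> low \<le> last P)"
  define c where "c = row_sum n y (m+1) (\<lambda>P. hd P < high \<and> last P < low)"
  define e where "e = row_sum n y (m+1) (\<lambda>P. low \<le> last P \<and> high \<le> hd P)"
  have s1: "row_sum n y (m+1) (\<lambda>Q. hd Q < high) = g + c"
    unfolding g_def c_def by (subst row_sum_split[where Q="\<lambda>P. low \<le> last P"]) (simp add: not_le)
  have s2: "row_sum n y (m+1) (\<lambda>Q. low \<le> last Q) = g + e"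
    unfolding g_def e_def by (subst row_sum_split[where Q="\<lambda>P. hd P < high"]) (simp add: not_less conj_commute)
  have s3: "a1 + a0 = z + b"
  proof -
    have "row_sum n y m (\<lambda>P. True) = a1 + a0" unfolding a1_def a0_def
      by (subst row_sum_split[where Q="\<lambda>P. low \<le> last P"]) (simp add: not_le)
    moreover have "row_sum n y m (\<lambda>P. True) = z + b" unfolding z_def b_def
      by (subst row_sum_split[where Q="\<lambda>P. high \<le> hd P"]) (simp add: not_le)
    ultimately show ?thesis by simp
  qed
  define t where "t = (if x = 0 then 0
    else row_sum n y (2*m+2-x) (\<lambda>C. hd C < high \<and> low \<le> last C) * row_sum n y (x - 1) (\<lambda>D. True))"
  have len: "m + (m + 1 - x) + 1 = 2*m+2-x" "m + 1 + (m - x) + 1 = 2*m+2-x" using x by auto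
  have "adj_pair n y m (m+1) x low high = a1 * (g + c) - t"
    unfolding s1[symmetric] a1_def t_def len(1)[symmetric] using m x by (intro adj_pair_formula) auto
  moreover have "adj_pair n y (m+1) m x low high = (g + e) * b - t"
    unfolding s2[symmetric] b_def t_def len(2)[symmetric] using m x by (intro adj_pair_formula) auto
  ultimately have "adj_pair n y m (m+1) x low high - adj_pair n y (m+1) m x low high = a1 * (g + c) - (g + e) * b"
    by simp
  moreover have "merge_left n y m low high = a0 * g - c * a1"
    unfolding merge_left_formula[OF m] a0_def g_def c_def a1_def by simp
  moreover have "merge_right n y m low high = z * g - e * b"
    unfolding merge_right_formula[OF m] z_def g_def e_def b_def ..
  moreover have "a1 * (g + c) - (g + e) * b - ((z * g - e * b) - (a0 * g - c * a1)) = g * (a1 + a0 - (z + b))"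
    by (simp add: algebra_simps)
  ultimately show ?thesis using s3 by simp
qed

definition fillings :: "nat \<Rightarrow> nat list \<Rightarrow> nat list \<Rightarrow> nat list list set" where
  "fillings n a b = {ws. length ws = length a \<and> (\<forall>i<length a. ws!i \<in> Row n (a!i))
      \<and> (\<forall>i. Suc i < length a \<longrightarrow> compat (ws!i) (ws!Suc i) (b!i))}"

definition wts :: "(nat \<Rightarrow> 'a::comm_ring_1) \<Rightarrow> nat list list \<Rightarrow> 'a" where
  "wts y ws = prod_list (map (wt y) ws)"

lemma wts_append[simp]: "wts y (xs @ ys) = wts y xs * wts y ys"
  by (simp add: wts_def)

lemma wts_Cons[simp]: "wts y (x # xs) = wt y x * wts y xs"
  by (simp add: wts_def)

lemma wts_Nil[simp]: "wts y [] = 1"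
  by (simp add: wts_def)

definition admissible :: "nat list \<Rightarrow> nat list \<Rightarrow> bool" where
  "admissible a b = (\<forall>i. Suc i < length a \<longrightarrow> b!i \<le> a!i \<and> b!i \<le> a!Suc i)"

definition row_start :: "nat list \<Rightarrow> nat list \<Rightarrow> nat \<Rightarrow> int" where
  "row_start a b i = rend a b i - int (a!i) + 1"

lemma cells_iff: "(i,j) \<in> cells a b \<longleftrightarrow> i < length a \<and> row_start a b i \<le> j \<and> j < row_start a b i + int (a!i)"
  by (auto simp: cells_def row_start_def)

lemma rend_mono:
  assumes ok: "admissible a b" and ii: "i \<le> i'" and il: "i' < length a"
  shows "rend a b i' \<le> rend a b i \<and> row_start a b i' \<le> row_start a b i"
  using ii il
proof (induction i' rule: dec_induct)
  case base then show ?case by simp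
next
  case (step k)
  have "b!k \<le> a!k" "b!k \<le> a!Suc k" using ok step.hyps step.prems unfolding admissible_def by auto
  then show ?case using step by (auto simp: row_start_def)
qed

definition tab_rows :: "nat list \<Rightarrow> nat list \<Rightarrow> (nat \<times> int \<Rightarrow> nat) \<Rightarrow> nat list list" where
  "tab_rows a b T = map (\<lambda>i. map (\<lambda>t. T (i, row_start a b i + int t)) [0..<a!i]) [0..<length a]"

definition rows_tab :: "nat list \<Rightarrow> nat list \<Rightarrow> nat list list \<Rightarrow> (nat \<times> int \<Rightarrow> nat)" where
  "rows_tab a b ws = (\<lambda>(i,j). if (i,j) \<in> cells a b then ws!i!nat (j - row_start a b i) else 0)"

lemma tab_rows_nth: "i < length a \<Longrightarrow> t < a!i \<Longrightarrow> tab_rows a b T ! i ! t = T (i, row_start a b i + int t)"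
  by (simp add: tab_rows_def)

lemma tab_rows_length: "length (tab_rows a b T) = length a" "i < length a \<Longrightarrow> length (tab_rows a b T ! i) = a!i"
  by (auto simp: tab_rows_def)

lemma tab_rows_Row:
  assumes T: "T \<in> ssyt n (cells a b)" and i: "i < length a"
  shows "tab_rows a b T ! i \<in> Row n (a!i)"
proof -
  have "sorted (tab_rows a b T ! i)" unfolding sorted_iff_nth_mono
  proof (intro allI impI)
    fix t t' assume tt: "t \<le> t'" "t' < length (tab_rows a b T ! i)"
    then have t': "t' < a!i" using tab_rows_length(2)[OF i] by simp
    show "tab_rows a b T ! i ! t \<le> tab_rows a b T ! i ! t'"
    proof (cases "t = t'")
      case True then show ?thesis by simp
    next
      case False
      then have "t < t'" using tt by simp
      then show ?thesis using T[unfolded ssyt_def mem_Collect_eq] t' i by (simp add: tab_rows_nth cells_iff)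
    qed
  qed
  moreover have "\<forall>v\<in>set (tab_rows a b T ! i). v < n"
  proof
    fix v assume "v \<in> set (tab_rows a b T ! i)"
    then obtain t where t: "t < a!i" "v = tab_rows a b T ! i ! t" using tab_rows_length(2)[OF i] by (auto simp: in_set_conv_nth)
    then show "v < n" using T[unfolded ssyt_def mem_Collect_eq] i by (simp add: tab_rows_nth cells_iff)
  qed
  ultimately show ?thesis using tab_rows_length(2)[OF i] by (simp add: Row_iff)
qed

lemma tab_rows_compat:
  assumes T: "T \<in> ssyt n (cells a b)" and ok: "admissible a b" and i: "Suc i < length a"
  shows "compat (tab_rows a b T ! i) (tab_rows a b T ! Suc i) (b!i)"
  unfolding compat_def
proof (intro allI impI)
  fix j assume j: "j < b!i"
  have ba: "b!i \<le> a!i" "b!i \<le> a!Suc i" using ok i unfolding admissible_def by auto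
  have e: "row_start a b (Suc i) + int (a!Suc i - b!i + j) = row_start a b i + int j"
    using ba by (simp add: row_start_def)
  have "T (i, row_start a b i + int j) < T (Suc i, row_start a b i + int j)"
    using T[unfolded ssyt_def mem_Collect_eq] i j ba e[symmetric] by (auto simp: cells_iff)
  moreover have k: "a!Suc i - b!i + j < a!Suc i" using j ba by simp
  moreover have "tab_rows a b T ! Suc i ! (a!Suc i - b!i + j) = T (Suc i, row_start a b (Suc i) + int (a!Suc i - b!i + j))"
    by (rule tab_rows_nth[OF _ k]) (use i in simp)
  moreover have "length (tab_rows a b T ! Suc i) = a!Suc i" using i by (simp add: tab_rows_length)
  moreover have "tab_rows a b T ! i ! j = T (i, row_start a b i + int j)" using i j ba by (simp add: tab_rows_nth)
  ultimately show "tab_rows a b T ! i ! j < tab_rows a b T ! Suc i ! (length (tab_rows a b T ! Suc i) - b ! i + j)"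
    by (simp only: e)
qed

lemma tab_rows_fillings:
  assumes T: "T \<in> ssyt n (cells a b)" and ok: "admissible a b"
  shows "tab_rows a b T \<in> fillings n a b"
  unfolding fillings_def using tab_rows_Row[OF T] tab_rows_compat[OF T ok] by (simp add: tab_rows_length)

lemma rows_tab_in: "(i,j) \<in> cells a b \<Longrightarrow> rows_tab a b ws (i,j) = ws!i!nat (j - row_start a b i)"
  by (simp add: rows_tab_def)

lemma rows_tab_adjacent:
  assumes ws: "ws \<in> fillings n a b" and ok: "admissible a b"
    and c1: "(i,j) \<in> cells a b" and c2: "(Suc i,j) \<in> cells a b"
  shows "rows_tab a b ws (i,j) < rows_tab a b ws (Suc i, j)"
proof -
  have i: "Suc i < length a" using c2 by (simp add: cells_iff)
  have ba: "b!i \<le> a!i" "b!i \<le> a!Suc i" using ok i unfolding admissible_def by auto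
  have comp: "compat (ws!i) (ws!Suc i) (b!i)" using ws i unfolding fillings_def by auto
  have len: "length (ws!Suc i) = a!Suc i" using ws i unfolding fillings_def Row_def by auto
  define t where "t = nat (j - row_start a b i)"
  have j_eq: "j = row_start a b i + int t" using c1 unfolding t_def by (simp add: cells_iff)
  have "j < row_start a b (Suc i) + int (a!Suc i)" using c2 by (simp add: cells_iff)
  then have tb: "t < b!i" using j_eq ba by (simp add: row_start_def)
  have e: "j - row_start a b (Suc i) = int (a!Suc i - b!i + t)" using j_eq ba by (simp add: row_start_def)
  have "ws!i!t < ws!Suc i!(a!Suc i - b!i + t)" using comp tb len unfolding compat_def by auto
  moreover have "rows_tab a b ws (i,j) = ws!i!t" using c1 by (simp add: rows_tab_in t_def)
  moreover have "rows_tab a b ws (Suc i,j) = ws!Suc i!(a!Suc i - b!i + t)" using c2 e by (simp only: rows_tab_in nat_int)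
  ultimately show ?thesis by simp
qed

lemma cells_between:
  assumes ok: "admissible a b" and c1: "(i,j) \<in> cells a b" and c2: "(i',j) \<in> cells a b"
    and ii: "i \<le> k" "k \<le> i'"
  shows "(k,j) \<in> cells a b"
proof -
  have i': "i' < length a" using c2 by (simp add: cells_iff)
  have m1: "rend a b i' \<le> rend a b k" using rend_mono[OF ok ii(2) i'] by simp
  have m2: "row_start a b k \<le> row_start a b i" using rend_mono[OF ok ii(1)] ii i' by simp
  show ?thesis using c1 c2 m1 m2 ii i' by (auto simp: cells_iff row_start_def)
qed

lemma rows_tab_column:
  assumes ws: "ws \<in> fillings n a b" and ok: "admissible a b"
  shows "(i,j) \<in> cells a b \<Longrightarrow> (i',j) \<in> cells a b \<Longrightarrow> i < i' \<Longrightarrow> rows_tab a b ws (i,j) < rows_tab a b ws (i', j)"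
proof (induction i')
  case 0 then show ?case by simp
next
  case (Suc k)
  show ?case
  proof (cases "i = k")
    case True then show ?thesis using rows_tab_adjacent[OF ws ok] Suc.prems by simp
  next
    case False
    then have ik: "i < k" using Suc.prems by simp
    have kc: "(k,j) \<in> cells a b" using cells_between[OF ok Suc.prems(1) Suc.prems(2)] ik by simp
    have "rows_tab a b ws (i,j) < rows_tab a b ws (k,j)" using Suc.IH[OF Suc.prems(1) kc ik] .
    also have "\<dots> < rows_tab a b ws (Suc k, j)" using rows_tab_adjacent[OF ws ok kc Suc.prems(2)] .
    finally show ?thesis .
  qed
qed

lemma rows_tab_ssyt:
  assumes ws: "ws \<in> fillings n a b" and ok: "admissible a b"
  shows "rows_tab a b ws \<in> ssyt n (cells a b)"
  unfolding ssyt_def mem_Collect_eq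
proof (intro conjI allI impI ballI)
  fix c assume c: "c \<in> cells a b"
  obtain i j where cij: "c = (i,j)" by (cases c)
  have i: "i < length a" and t: "nat (j - row_start a b i) < a!i" using c cij by (auto simp: cells_iff)
  have "ws!i \<in> Row n (a!i)" using ws i unfolding fillings_def by auto
  then show "rows_tab a b ws c < n" using c cij t by (simp add: rows_tab_in Row_nth_bound)
next
  fix c assume "c \<notin> cells a b" then show "rows_tab a b ws c = 0" by (cases c) (simp add: rows_tab_def)
next
  fix i j j' assume h: "(i, j) \<in> cells a b \<and> (i, j') \<in> cells a b \<and> j < j'"
  have i: "i < length a" using h by (simp add: cells_iff)
  have r: "ws!i \<in> Row n (a!i)" using ws i unfolding fillings_def by auto
  have "ws!i!nat (j - row_start a b i) \<le> ws!i!nat (j' - row_start a b i)"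
    using r h by (intro sorted_nth_mono) (auto simp: Row_iff cells_iff)
  then show "rows_tab a b ws (i, j) \<le> rows_tab a b ws (i, j')" using h by (simp add: rows_tab_in)
next
  fix i i' j assume h: "(i, j) \<in> cells a b \<and> (i', j) \<in> cells a b \<and> i < i'"
  then show "rows_tab a b ws (i, j) < rows_tab a b ws (i', j)" using rows_tab_column[OF ws ok] by blast
qed

lemma rows_tab_tab_rows: assumes T: "T \<in> ssyt n (cells a b)" shows "rows_tab a b (tab_rows a b T) = T"
proof (rule ext)
  fix c :: "nat \<times> int"
  obtain i j where cij: "c = (i,j)" by (cases c)
  show "rows_tab a b (tab_rows a b T) c = T c"
  proof (cases "c \<in> cells a b")
    case True
    then have i: "i < length a" and t: "nat (j - row_start a b i) < a!i" and j: "row_start a b i \<le> j"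
      using cij by (auto simp: cells_iff)
    show ?thesis using True cij i t j by (simp add: rows_tab_in tab_rows_nth)
  next
    case False then show ?thesis using T cij by (simp add: rows_tab_def ssyt_def)
  qed
qed

lemma tab_rows_rows_tab: "ws \<in> fillings n a b \<Longrightarrow> tab_rows a b (rows_tab a b ws) = ws"
proof -
  assume ws: "ws \<in> fillings n a b"
  have l: "length ws = length a" using ws by (simp add: fillings_def)
  have li: "length (ws!i) = a!i" if "i < length a" for i using ws that unfolding fillings_def Row_def by auto
  show ?thesis
  proof (rule nth_equalityI)
    show "length (tab_rows a b (rows_tab a b ws)) = length ws" using l by (simp add: tab_rows_length)
    fix i assume i: "i < length (tab_rows a b (rows_tab a b ws))"
    then have i': "i < length a" by (simp add: tab_rows_length)
    show "tab_rows a b (rows_tab a b ws) ! i = ws ! i"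
    proof (rule nth_equalityI)
      show "length (tab_rows a b (rows_tab a b ws) ! i) = length (ws ! i)" using i' li by (simp add: tab_rows_length)
      fix t assume t: "t < length (tab_rows a b (rows_tab a b ws) ! i)"
      then have t': "t < a!i" using i' by (simp add: tab_rows_length)
      have "(i, row_start a b i + int t) \<in> cells a b" using i' t' by (simp add: cells_iff)
      then show "tab_rows a b (rows_tab a b ws) ! i ! t = ws ! i ! t" using i' t' by (simp add: tab_rows_nth rows_tab_in)
    qed
  qed
qed

lemma cells_Sigma: "cells a b = Sigma {..<length a} (\<lambda>i. (\<lambda>t. row_start a b i + int t) ` {..<a!i})"
proof (rule set_eqI)
  fix c :: "nat \<times> int"
  obtain i j where cij: "c = (i,j)" by (cases c)
  have "j \<in> (\<lambda>t. row_start a b i + int t) ` {..<a!i} \<longleftrightarrow> row_start a b i \<le> j \<and> j < row_start a b i + int (a!i)"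
  proof
    assume "row_start a b i \<le> j \<and> j < row_start a b i + int (a!i)"
    then show "j \<in> (\<lambda>t. row_start a b i + int t) ` {..<a!i}"
      by (intro image_eqI[of _ _ "nat (j - row_start a b i)"]) auto
  qed auto
  then show "c \<in> cells a b \<longleftrightarrow> c \<in> Sigma {..<length a} (\<lambda>i. (\<lambda>t. row_start a b i + int t) ` {..<a!i})"
    using cij by (auto simp: cells_iff)
qed

lemma prod_list_upt: "prod_list (map f [0..<k]) = (\<Prod>i<k. f i)"
  by (simp add: prod.distinct_set_conv_list[symmetric] atLeast0LessThan)

lemma weight_tab_rows:
  "(\<Prod>c\<in>cells a b. y (T c)) = wts y (tab_rows a b T)"
proof -
  have "(\<Prod>c\<in>cells a b. y (T c)) = (\<Prod>i<length a. \<Prod>j\<in>(\<lambda>t. row_start a b i + int t) ` {..<a!i}. y (T (i,j)))"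
    unfolding cells_Sigma by (subst prod.Sigma) (auto simp: case_prod_beta)
  also have "\<dots> = (\<Prod>i<length a. \<Prod>t<a!i. y (T (i, row_start a b i + int t)))"
    by (intro prod.cong refl, subst prod.reindex) (auto simp: inj_on_def)
  also have "\<dots> = wts y (tab_rows a b T)"
    unfolding wts_def tab_rows_def wt_def
    by (simp add: map_map comp_def prod_list_upt)
  finally show ?thesis .
qed

lemma skew_schur_fillings:
  assumes ok: "admissible a b"
  shows "skew_schur n y a b = (\<Sum>ws\<in>fillings n a b. wts y ws)"
  unfolding skew_schur_def
proof (rule sum.reindex_bij_witness[where j="tab_rows a b" and i="rows_tab a b"])
  fix T assume "T \<in> ssyt n (cells a b)"
  then show "rows_tab a b (tab_rows a b T) = T" "tab_rows a b T \<in> fillings n a b" "wts y (tab_rows a b T) = (\<Prod>c\<in>cells a b. y (T c))"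
    using rows_tab_tab_rows tab_rows_fillings[OF _ ok] weight_tab_rows[symmetric] by auto
next
  fix ws assume "ws \<in> fillings n a b"
  then show "tab_rows a b (rows_tab a b ws) = ws" "rows_tab a b ws \<in> ssyt n (cells a b)"
    using tab_rows_rows_tab rows_tab_ssyt[OF _ ok] by auto
qed

lemma finite_fillings: "finite (fillings n a b)"
proof -
  have "fillings n a b \<subseteq> {ws. set ws \<subseteq> (\<Union>k\<in>set a. Row n k) \<and> length ws = length a}"
    by (auto simp: fillings_def in_set_conv_nth) (metis nth_mem)
  moreover have "finite (\<Union>k\<in>set a. Row n k)" using finite_Row by auto
  ultimately show ?thesis using finite_lists_length_eq finite_subset by blast
qed

lemma fillings_Nil: "fillings n [] b = {[]}"
  by (auto simp: fillings_def)

lemma fillings_single_sum: "(\<Sum>u\<in>fillings n [k] b. g u) = (\<Sum>w\<in>Row n k. g [w])"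
proof -
  have "fillings n [k] b = (\<lambda>w. [w]) ` Row n k"
  proof (rule set_eqI)
    fix ws show "ws \<in> fillings n [k] b \<longleftrightarrow> ws \<in> (\<lambda>w. [w]) ` Row n k"
      by (cases ws) (auto simp: fillings_def)
  qed
  then show ?thesis by (simp add: sum.reindex inj_on_def)
qed

definition glue :: "nat \<Rightarrow> nat list list \<Rightarrow> nat list list \<Rightarrow> bool" where
  "glue c u v = (u \<noteq> [] \<longrightarrow> v \<noteq> [] \<longrightarrow> compat (last u) (hd v) c)"

lemma glue_Cons: "glue c u (P # v) = glue c u [P]"
  by (simp add: glue_def)

lemma fillings_append_split:
  assumes ws: "u @ v \<in> fillings n (a1@a2) (b1@b2)"
    and lu: "length u = length a1" and lb: "length b1 = length a1"
  shows "u \<in> fillings n a1 b1" "v \<in> fillings n a2 b2" "glue (last b1) u v"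
proof -
  let ?L = "length a1"
  have lv: "length v = length a2" using ws lu by (simp add: fillings_def)
  have rows: "\<And>i. i < ?L + length a2 \<Longrightarrow> (u@v)!i \<in> Row n ((a1@a2)!i)"
    and cp: "\<And>i. Suc i < ?L + length a2 \<Longrightarrow> compat ((u@v)!i) ((u@v)!Suc i) ((b1@b2)!i)"
    using ws by (simp_all add: fillings_def)
  show "u \<in> fillings n a1 b1" unfolding fillings_def
  proof (intro CollectI conjI allI impI)
    fix i assume "i < ?L" then show "u ! i \<in> Row n (a1 ! i)" using rows[of i] lu by (simp add: nth_append)
  next
    fix i assume "Suc i < ?L"
    then show "compat (u ! i) (u ! Suc i) (b1 ! i)" using cp[of i] lu lb by (simp add: nth_append)
  qed (rule lu)
  show "v \<in> fillings n a2 b2" unfolding fillings_def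
  proof (intro CollectI conjI allI impI)
    fix i assume "i < length a2"
    then show "v ! i \<in> Row n (a2 ! i)" using rows[of "?L + i"] lu by (simp add: nth_append)
  next
    fix i assume "Suc i < length a2"
    then show "compat (v ! i) (v ! Suc i) (b2 ! i)" using cp[of "?L + i"] lu lb by (simp add: nth_append)
  qed (rule lv)
  show "glue (last b1) u v" unfolding glue_def
  proof (intro impI)
    assume nu: "u \<noteq> []" and nv: "v \<noteq> []"
    then have L0: "0 < ?L" and L2: "0 < length a2" using lu lv by auto
    have "b1 \<noteq> []" using lb L0 by auto
    then have "last u = (u@v)!(?L - 1)" "hd v = (u@v)!?L" "last b1 = (b1@b2)!(?L - 1)"
      using nu nv lu lb L0 by (simp_all add: nth_append last_conv_nth hd_conv_nth)
    then show "compat (last u) (hd v) (last b1)" using cp[of "?L - 1"] L0 L2 by simp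
  qed
qed

lemma fillings_append_join:
  assumes u: "u \<in> fillings n a1 b1" and v: "v \<in> fillings n a2 b2" and g: "glue (last b1) u v"
    and lb: "length b1 = length a1"
  shows "u @ v \<in> fillings n (a1@a2) (b1@b2)"
  unfolding fillings_def
proof (intro CollectI conjI allI impI)
  let ?L = "length a1"
  have lu: "length u = ?L" and lv: "length v = length a2" using u v by (simp_all add: fillings_def)
  then show "length (u @ v) = length (a1 @ a2)" by simp
  fix i assume "i < length (a1 @ a2)"
  then show "(u @ v) ! i \<in> Row n ((a1 @ a2) ! i)"
    using u v lu by (cases "i < ?L") (auto simp: fillings_def nth_append)
next
  let ?L = "length a1"
  have lu: "length u = ?L" and lv: "length v = length a2" using u v by (simp_all add: fillings_def)
  fix i assume i: "Suc i < length (a1 @ a2)"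
  consider "Suc i < ?L" | "Suc i = ?L" | "?L < Suc i" by linarith
  then show "compat ((u @ v) ! i) ((u @ v) ! Suc i) ((b1 @ b2) ! i)"
  proof cases
    case 1 then show ?thesis using u lu lb by (auto simp: fillings_def nth_append)
  next
    case 2
    then have nu: "u \<noteq> []" and nv: "v \<noteq> []" using i lu lv by auto
    moreover have "length u = Suc i" "length b1 = Suc i" "b1 \<noteq> []" using 2 lu lb by auto
    ultimately have "last u = (u@v)!i" "hd v = (u@v)!Suc i" "last b1 = (b1@b2)!i"
      by (simp_all add: nth_append last_conv_nth hd_conv_nth)
    moreover have "compat (last u) (hd v) (last b1)" using g nu nv by (simp add: glue_def)
    ultimately show ?thesis by simp
  next
    case 3
    then have "compat (v ! (i - ?L)) (v ! Suc (i - ?L)) (b2 ! (i - ?L))"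
      using v i by (auto simp: fillings_def)
    then show ?thesis using 3 lu lb by (simp add: nth_append Suc_diff_le)
  qed
qed

lemma fillings_append_sum:
  assumes lb: "length b1 = length a1"
  shows "(\<Sum>ws\<in>fillings n (a1@a2) (b1@b2). f ws)
     = (\<Sum>u\<in>fillings n a1 b1. \<Sum>v\<in>fillings n a2 b2. if glue (last b1) u v then f (u@v) else 0)"
proof -
  let ?S = "{(u,v). u\<in>fillings n a1 b1 \<and> v\<in>fillings n a2 b2 \<and> glue (last b1) u v}"
  have "(\<Sum>u\<in>fillings n a1 b1. \<Sum>v\<in>fillings n a2 b2. if glue (last b1) u v then f (u@v) else 0)
      = (\<Sum>p\<in>?S. f (fst p @ snd p))"
    by (rule double_sum_pairs[OF finite_fillings finite_fillings])
  also have "\<dots> = (\<Sum>ws\<in>fillings n (a1@a2) (b1@b2). f ws)"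
  proof (rule sum.reindex_bij_witness[where j="\<lambda>p. fst p @ snd p"
        and i="\<lambda>ws. (take (length a1) ws, drop (length a1) ws)"])
    fix p assume p: "p \<in> ?S"
    then have "length (fst p) = length a1" by (auto simp: fillings_def)
    then show "(take (length a1) (fst p @ snd p), drop (length a1) (fst p @ snd p)) = p" by simp
    show "fst p @ snd p \<in> fillings n (a1 @ a2) (b1 @ b2)"
      using p fillings_append_join[OF _ _ _ lb] by auto
  next
    fix ws assume ws: "ws \<in> fillings n (a1 @ a2) (b1 @ b2)"
    then have lu: "length (take (length a1) ws) = length a1" by (simp add: fillings_def)
    from ws have "take (length a1) ws @ drop (length a1) ws \<in> fillings n (a1 @ a2) (b1 @ b2)" by simp
    from fillings_append_split[OF this lu lb]
    show "(take (length a1) ws, drop (length a1) ws) \<in> ?S" by simp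
  qed simp_all
  finally show ?thesis by simp
qed

lemma fillings_Cons_sum:
  assumes lb: "length b = length a"
  shows "(\<Sum>v\<in>fillings n (k#a) b. h v)
     = (\<Sum>Q\<in>Row n k. \<Sum>L\<in>fillings n a (tl b). if glue (hd b) [Q] L then h (Q#L) else 0)"
proof (cases b)
  case Nil
  then show ?thesis using lb by (simp add: fillings_Nil fillings_single_sum glue_def)
next
  case (Cons c b')
  have "(\<Sum>v\<in>fillings n ([k]@a) ([c]@b'). h v)
      = (\<Sum>u\<in>fillings n [k] [c]. \<Sum>L\<in>fillings n a b'. if glue (last [c]) u L then h (u@L) else 0)"
    by (rule fillings_append_sum) simp
  also have "\<dots> = (\<Sum>Q\<in>Row n k. \<Sum>L\<in>fillings n a b'. if glue c [Q] L then h (Q#L) else 0)"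
    by (simp only: fillings_single_sum append_Cons append_Nil last_ConsL)
  finally show ?thesis using Cons by simp
qed

lemma fillings_pattern_sum:
  fixes f :: "nat list list \<Rightarrow> 'a::comm_monoid_add"
  assumes ls: "length sb = length sig" and lt: "length tb = length tau"
  shows "(\<Sum>ws\<in>fillings n (sig@[k1,k2]@tau) (sb@[x]@tb). f ws) =
    (\<Sum>U\<in>fillings n sig sb. \<Sum>P\<in>Row n k1. \<Sum>Q\<in>Row n k2. \<Sum>L\<in>fillings n tau (tl tb).
      if glue (last sb) U [P] \<and> compat P Q x \<and> glue (hd tb) [Q] L then f (U@[P,Q]@L) else 0)"
proof -
  have "(\<Sum>ws\<in>fillings n (sig@[k1,k2]@tau) (sb@[x]@tb). f ws)
     = (\<Sum>U\<in>fillings n sig sb. \<Sum>v\<in>fillings n (k1#k2#tau) (x#tb).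
          if glue (last sb) U v then f (U@v) else 0)"
    using fillings_append_sum[OF ls, where n=n and ?a2.0="k1#k2#tau" and ?b2.0="x#tb" and f=f] by simp
  also have "\<dots> = (\<Sum>U\<in>fillings n sig sb. \<Sum>P\<in>Row n k1. \<Sum>Q\<in>Row n k2. \<Sum>L\<in>fillings n tau (tl tb).
      if glue (last sb) U [P] \<and> compat P Q x \<and> glue (hd tb) [Q] L then f (U@[P,Q]@L) else 0)"
  proof (rule sum.cong[OF refl])
    fix U
    have "(\<Sum>v\<in>fillings n (k1#k2#tau) (x#tb). g v) = (\<Sum>P\<in>Row n k1. \<Sum>Q\<in>Row n k2.
      \<Sum>L\<in>fillings n tau (tl tb). if glue (hd tb) [Q] L then (if glue x [P] (Q#L) then g (P#Q#L) else 0) else 0)"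
      for g :: "nat list list \<Rightarrow> 'a"
      using lt by (simp add: fillings_Cons_sum)
    then show "(\<Sum>v\<in>fillings n (k1#k2#tau) (x#tb). if glue (last sb) U v then f (U@v) else 0)
      = (\<Sum>P\<in>Row n k1. \<Sum>Q\<in>Row n k2. \<Sum>L\<in>fillings n tau (tl tb).
      if glue (last sb) U [P] \<and> compat P Q x \<and> glue (hd tb) [Q] L then f (U@[P,Q]@L) else 0)"
      by (auto simp: glue_Cons glue_def intro!: sum.cong)
  qed
  finally show ?thesis .
qed

(* The bounds imposed on a neighbouring row by the filling U of sigma above it and by the
   filling L of tau below it: overlaps with sigma and tau are single columns (the standing
   hypothesis last sb = 1 = hd tb), so only the first entry of the last row of U and the
   last entry of the first row of L matter. *)
definition row_floor :: "nat list list \<Rightarrow> nat" where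
  "row_floor U = (if U = [] then 0 else Suc (hd (last U)))"

definition row_ceiling :: "nat \<Rightarrow> nat list list \<Rightarrow> nat" where
  "row_ceiling n L = (if L = [] then n else last (hd L))"

lemma compat_one: "r \<noteq> [] \<Longrightarrow> P \<noteq> [] \<Longrightarrow> compat r P (Suc 0) = (hd r < last P)"
  by (simp add: compat_def hd_conv_nth last_conv_nth)

lemma fillings_last_row: "U \<in> fillings n sig sb \<Longrightarrow> U \<noteq> [] \<Longrightarrow> last U \<in> Row n (last sig) \<and> sig \<noteq> []"
proof -
  assume U: "U \<in> fillings n sig sb" and ne: "U \<noteq> []"
  have l: "length U = length sig" using U by (simp add: fillings_def)
  then have "sig \<noteq> []" using ne by auto
  moreover have "U!(length U - 1) \<in> Row n (sig!(length sig - 1))"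
  proof -
    have "\<forall>i<length sig. U!i \<in> Row n (sig!i)" using U by (simp add: fillings_def)
    moreover have "length sig - 1 < length sig" using \<open>sig \<noteq> []\<close> by simp
    ultimately show ?thesis using l by simp
  qed
  ultimately show ?thesis using ne l by (simp add: last_conv_nth)
qed

lemma fillings_hd_row: "L \<in> fillings n tau tb \<Longrightarrow> L \<noteq> [] \<Longrightarrow> hd L \<in> Row n (hd tau) \<and> tau \<noteq> []"
proof -
  assume L: "L \<in> fillings n tau tb" and ne: "L \<noteq> []"
  have l: "length L = length tau" using L by (simp add: fillings_def)
  then have "tau \<noteq> []" using ne by auto
  moreover have "L!0 \<in> Row n (tau!0)"
  proof -
    have "\<forall>i<length tau. L!i \<in> Row n (tau!i)" using L by (simp add: fillings_def)
    then show ?thesis using \<open>tau \<noteq> []\<close> by simp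
  qed
  ultimately show ?thesis using ne l by (simp add: hd_conv_nth)
qed

lemma glue_floor:
  assumes U: "U \<in> fillings n sig sb" and s1: "\<forall>k\<in>set sig. k \<ge> 1" and ls: "sig \<noteq> [] \<Longrightarrow> last sb = 1"
    and P: "P \<noteq> []"
  shows "glue (last sb) U [P] = (row_floor U \<le> last P)"
proof (cases "U = []")
  case True then show ?thesis by (simp add: glue_def row_floor_def)
next
  case False
  have r: "last U \<in> Row n (last sig)" and sn: "sig \<noteq> []" using fillings_last_row[OF U False] by auto
  have "last sig \<ge> 1" using s1 sn by simp
  then have "last U \<noteq> []" using r by (auto simp: Row_iff)
  then show ?thesis using False P ls[OF sn] by (simp add: glue_def row_floor_def compat_one Suc_le_eq)
qed

lemma glue_ceiling:
  assumes L: "L \<in> fillings n tau tb'" and t1: "\<forall>k\<in>set tau. k \<ge> 1" and ht: "tau \<noteq> [] \<Longrightarrow> c = 1"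
    and Q: "Q \<in> Row n k" and k: "1 \<le> k"
  shows "glue c [Q] L = (hd Q < row_ceiling n L)"
proof (cases "L = []")
  case True then show ?thesis using Row_hd_bound[OF Q k] by (simp add: glue_def row_ceiling_def)
next
  case False
  have r: "hd L \<in> Row n (hd tau)" and tn: "tau \<noteq> []" using fillings_hd_row[OF L False] by auto
  have "hd tau \<ge> 1" using t1 tn by simp
  then have "hd L \<noteq> []" using r by (auto simp: Row_iff)
  moreover have "Q \<noteq> []" using Q k by (auto simp: Row_iff)
  ultimately show ?thesis using False ht[OF tn] by (simp add: glue_def row_ceiling_def compat_one)
qed

lemma sum_rotate3: "(\<Sum>a\<in>A. \<Sum>b\<in>B. \<Sum>c\<in>C. f a b c) = (\<Sum>c\<in>C. \<Sum>a\<in>A. \<Sum>b\<in>B. f a b c)"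
proof -
  have "(\<Sum>a\<in>A. \<Sum>b\<in>B. \<Sum>c\<in>C. f a b c) = (\<Sum>a\<in>A. \<Sum>c\<in>C. \<Sum>b\<in>B. f a b c)"
    by (rule sum.cong[OF refl], rule sum.swap)
  also have "\<dots> = (\<Sum>c\<in>C. \<Sum>a\<in>A. \<Sum>b\<in>B. f a b c)" by (rule sum.swap)
  finally show ?thesis .
qed

(* The sum over the outer fillings U of sigma and L of tau, with a local weight G depending
   only on the bounds they impose.  All skew Schur functions in the theorem have this form. *)
definition boundary_sum :: "nat \<Rightarrow> (nat \<Rightarrow> 'a::comm_ring_1) \<Rightarrow> nat list \<Rightarrow> nat list \<Rightarrow> nat list
    \<Rightarrow> nat list \<Rightarrow> (nat \<Rightarrow> nat \<Rightarrow> 'a) \<Rightarrow> 'a" where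
  "boundary_sum n y sig sb tau tb G = (\<Sum>U\<in>fillings n sig sb. \<Sum>L\<in>fillings n tau (tl tb).
     wts y U * wts y L * G (row_floor U) (row_ceiling n L))"

lemma boundary_sum_diff:
  "boundary_sum n y sig sb tau tb G - boundary_sum n y sig sb tau tb H
     = boundary_sum n y sig sb tau tb (\<lambda>a b. G a b - H a b)"
  by (simp add: boundary_sum_def sum_subtractf[symmetric] right_diff_distrib)

lemma adjacent_rows_sum:
  fixes y :: "nat \<Rightarrow> 'a::comm_ring_1"
  assumes ls: "length sb = length sig" and lt: "length tb = length tau"
    and s1: "\<forall>k\<in>set sig. k \<ge> 1" and t1: "\<forall>k\<in>set tau. k \<ge> 1"
    and lsb: "sig \<noteq> [] \<Longrightarrow> last sb = 1" and htb: "tau \<noteq> [] \<Longrightarrow> hd tb = 1"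
    and k1: "1 \<le> k1" and k2: "1 \<le> k2"
  shows "(\<Sum>ws\<in>fillings n (sig@[k1,k2]@tau) (sb@[x]@tb). wts y ws)
       = boundary_sum n y sig sb tau tb (adj_pair n y k1 k2 x)"
  unfolding fillings_pattern_sum[OF ls lt] boundary_sum_def
proof (rule sum.cong[OF refl])
  fix U assume U: "U \<in> fillings n sig sb"
  have "(\<Sum>P\<in>Row n k1. \<Sum>Q\<in>Row n k2. \<Sum>L\<in>fillings n tau (tl tb).
      if glue (last sb) U [P] \<and> compat P Q x \<and> glue (hd tb) [Q] L then wts y (U@[P,Q]@L) else 0)
    = (\<Sum>L\<in>fillings n tau (tl tb). \<Sum>P\<in>Row n k1. \<Sum>Q\<in>Row n k2.
      if glue (last sb) U [P] \<and> compat P Q x \<and> glue (hd tb) [Q] L then wts y (U@[P,Q]@L) else 0)"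
    by (rule sum_rotate3)
  also have "\<dots> = (\<Sum>L\<in>fillings n tau (tl tb).
      wts y U * wts y L * adj_pair n y k1 k2 x (row_floor U) (row_ceiling n L))"
    unfolding adj_pair_def sum_distrib_left
  proof (intro sum.cong refl)
    fix L P Q assume L: "L \<in> fillings n tau (tl tb)" and P: "P \<in> Row n k1" and Q: "Q \<in> Row n k2"
    have "glue (last sb) U [P] = (row_floor U \<le> last P)" by (rule glue_floor[OF U s1 lsb Row_ne[OF P k1]])
    moreover have "glue (hd tb) [Q] L = (hd Q < row_ceiling n L)" by (rule glue_ceiling[OF L t1 htb Q k2])
    ultimately show "(if glue (last sb) U [P] \<and> compat P Q x \<and> glue (hd tb) [Q] L then wts y (U@[P,Q]@L) else 0)
      = wts y U * wts y L * (if row_floor U \<le> last P \<and> compat P Q x \<and> hd Q < row_ceiling n L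
          then wt y P * wt y Q else 0)"
      by (simp add: ac_simps)
  qed
  finally show "(\<Sum>P\<in>Row n k1. \<Sum>Q\<in>Row n k2. \<Sum>L\<in>fillings n tau (tl tb).
      if glue (last sb) U [P] \<and> compat P Q x \<and> glue (hd tb) [Q] L then wts y (U@[P,Q]@L) else 0)
    = (\<Sum>L\<in>fillings n tau (tl tb). wts y U * wts y L * adj_pair n y k1 k2 x (row_floor U) (row_ceiling n L))" .
qed

lemma compat_app_right: "c \<le> length R \<Longrightarrow> compat r (E @ R) c = compat r R c"
proof -
  assume c: "c \<le> length R"
  have "\<And>j. (E@R)!(length (E@R) - c + j) = R!(length R - c + j)"
  proof -
    fix j
    have "length (E@R) - c + j = length E + (length R - c + j)" using c by simp
    then show "(E@R)!(length (E@R) - c + j) = R!(length R - c + j)" by (simp only: nth_append_length_plus)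
  qed
  then show ?thesis unfolding compat_def by simp
qed

lemma compat_app_left: "c \<le> length A \<Longrightarrow> compat (A @ B) r c = compat A r c"
  unfolding compat_def by (simp add: nth_append)

lemma compat_split1:
  assumes lE: "length E = m" and lR: "R \<noteq> []" and lP: "length P = Suc m"
  shows "compat (E @ R) P (Suc m) = ((\<forall>j<m. E!j < P!j) \<and> hd R < last P)"
proof -
  have "compat (E @ R) P (Suc m) = (\<forall>j<Suc m. (E@R)!j < P!j)"
    unfolding compat_def using lP by simp
  also have "\<dots> = ((E@R)!m < P!m \<and> (\<forall>j<m. (E@R)!j < P!j))" by (rule All_less_Suc)
  also have "\<dots> = ((\<forall>j<m. E!j < P!j) \<and> hd R < last P)"
  proof -
    have "last P = P!m" using lP by (subst last_conv_nth) auto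
    moreover have "(E@R)!m = hd R" using lE lR by (simp add: nth_append hd_conv_nth)
    moreover have "\<forall>j<m. (E@R)!j = E!j" using lE by (simp add: nth_append)
    ultimately show ?thesis by auto
  qed
  finally show ?thesis .
qed

lemma compat_split2:
  assumes lP: "length P = Suc m" and lL: "Lh \<noteq> []" and lX: "length X = m"
  shows "compat P (Lh @ X) (Suc m) = (hd P < last Lh \<and> (\<forall>j<m. P!(Suc j) < X!j))"
proof -
  have "compat P (Lh @ X) (Suc m) = (\<forall>j<Suc m. P!j < (Lh@X)!(length Lh - 1 + j))"
    unfolding compat_def using lX lL by (simp add: add.commute)
  also have "\<dots> = (P!0 < (Lh@X)!(length Lh - 1 + 0) \<and> (\<forall>j<m. P!(Suc j) < (Lh@X)!(length Lh - 1 + Suc j)))"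
    by (rule All_less_Suc2)
  also have "\<dots> = (hd P < last Lh \<and> (\<forall>j<m. P!(Suc j) < X!j))"
  proof -
    have "hd P = P!0" using lP by (subst hd_conv_nth) auto
    moreover have "(Lh@X)!(length Lh - 1 + 0) = last Lh" using lL by (simp add: nth_append last_conv_nth)
    moreover have "\<forall>j. (Lh@X)!(length Lh - 1 + Suc j) = X!j"
    proof
      fix j
      have "length Lh - 1 + Suc j = length Lh + j" using lL by (cases Lh) auto
      then show "(Lh@X)!(length Lh - 1 + Suc j) = X!j" by (simp only: nth_append_length_plus)
    qed
    ultimately show ?thesis by simp
  qed
  finally show ?thesis .
qed

definition row_join :: "nat list \<Rightarrow> nat list \<Rightarrow> bool" where
  "row_join A B = (A \<noteq> [] \<longrightarrow> B \<noteq> [] \<longrightarrow> last A \<le> hd B)"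

lemma Row_append_sum:
  "(\<Sum>N\<in>Row n (k1+k2). g N) = (\<Sum>A\<in>Row n k1. \<Sum>B\<in>Row n k2. if row_join A B then g (A@B) else 0)"
proof -
  have "(\<Sum>A\<in>Row n k1. \<Sum>B\<in>Row n k2. if row_join A B then g (A@B) else 0)
      = (\<Sum>p\<in>{(A,B). A\<in>Row n k1 \<and> B\<in>Row n k2 \<and> row_join A B}. g (fst p @ snd p))"
    by (rule double_sum_pairs[OF finite_Row finite_Row])
  also have "\<dots> = (\<Sum>N\<in>Row n (k1+k2). g N)"
  proof (rule sum.reindex_bij_witness[where j="\<lambda>p. fst p @ snd p" and i="\<lambda>N. (take k1 N, drop k1 N)"])
    fix p assume p: "p \<in> {(A,B). A\<in>Row n k1 \<and> B\<in>Row n k2 \<and> row_join A B}"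
    then obtain A B where pAB: "p = (A,B)" and A: "A \<in> Row n k1" and B: "B \<in> Row n k2" and c: "row_join A B" by auto
    have lA: "length A = k1" using A by (simp add: Row_iff)
    show "(take k1 (fst p @ snd p), drop k1 (fst p @ snd p)) = p" using pAB lA by simp
    have "sorted (A @ B)" using A B c by (intro sorted_app) (auto simp: Row_iff row_join_def)
    then show "fst p @ snd p \<in> Row n (k1 + k2)" using pAB A B by (auto simp: Row_iff)
  next
    fix N assume N: "N \<in> Row n (k1 + k2)"
    show "fst (take k1 N, drop k1 N) @ snd (take k1 N, drop k1 N) = N" by simp
    have lN: "length N = k1 + k2" and sN: "sorted N" and bN: "\<forall>v\<in>set N. v < n" using N by (auto simp: Row_iff)
    have "sorted (take k1 N @ drop k1 N)" using sN by simp
    then have sorted_parts: "sorted (take k1 N)" "sorted (drop k1 N)" and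
      cr: "\<forall>u\<in>set (take k1 N). \<forall>v\<in>set (drop k1 N). u \<le> v"
      unfolding sorted_append by auto
    have "row_join (take k1 N) (drop k1 N)" unfolding row_join_def using cr by auto
    then show "(take k1 N, drop k1 N) \<in> {(A,B). A\<in>Row n k1 \<and> B\<in>Row n k2 \<and> row_join A B}"
      using sorted_parts lN bN by (auto simp: Row_iff dest: in_set_takeD in_set_dropD)
  qed simp
  finally show ?thesis by simp
qed

lemma if_sum: "(if c then sum f A else 0) = (\<Sum>a\<in>A. if c then f a else 0)"
  by simp

lemma right_merge_local:
  fixes y :: "nat \<Rightarrow> 'a::comm_ring_1"
  assumes U: "U \<in> fillings n sig sb" and s1: "\<forall>k\<in>set sig. k \<ge> 1" and lsb: "sig \<noteq> [] \<Longrightarrow> last sb = 1"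
    and Lh: "Lh \<in> Row n h" and h: "1 \<le> h" and m: "1 \<le> m" and ov: "L' \<noteq> [] \<Longrightarrow> c \<le> h"
  shows "(\<Sum>P\<in>Row n (m+1). \<Sum>X\<in>Row n m. if row_join Lh X then
        (if glue (last sb) U [P] \<and> compat P (Lh @ X) (m + 1) \<and> glue c [Lh @ X] L'
         then wts y (U @ [P, Lh @ X] @ L') else 0) else 0)
    = (if glue c [Lh] L' then wts y U * wts y (Lh # L') * merge_right n y m (row_floor U) (last Lh) else 0)"
  unfolding merge_right_def if_sum sum_distrib_left
proof (intro sum.cong refl)
  fix P X assume P: "P \<in> Row n (m+1)" and X: "X \<in> Row n m"
  have Lhne: "Lh \<noteq> []" using Lh h by (auto simp: Row_iff)
  have lP: "length P = Suc m" and Xne: "X \<noteq> []" and lX: "length X = m" using P X m by (auto simp: Row_iff)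
  have "glue c [Lh @ X] L' = glue c [Lh] L'"
    using ov Lh by (cases "L' = []") (auto simp: glue_def compat_app_left Row_iff)
  moreover have "glue (last sb) U [P] = (row_floor U \<le> last P)"
    by (rule glue_floor[OF U s1 lsb]) (use lP in auto)
  moreover have "compat P (Lh @ X) (m + 1) = (hd P < last Lh \<and> (\<forall>j<m. P!(Suc j) < X!j))"
    using compat_split2[OF lP Lhne lX] by simp
  moreover have "row_join Lh X = (last Lh \<le> hd X)" using Lhne Xne by (simp add: row_join_def)
  ultimately show "(if row_join Lh X then (if glue (last sb) U [P] \<and> compat P (Lh @ X) (m + 1)
        \<and> glue c [Lh @ X] L' then wts y (U @ [P, Lh @ X] @ L') else 0) else 0)
    = (if glue c [Lh] L' then wts y U * wts y (Lh # L') * (if last Lh \<le> hd X \<and> (\<forall>j<m. P ! Suc j < X ! j)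
        \<and> row_floor U \<le> last P \<and> hd P < last Lh then wt y P * wt y X else 0) else 0)"
    by (auto simp: ac_simps)
qed

lemma hd_tl_overlap:
  fixes tb tau :: "nat list"
  assumes lt: "length tb = length tau" and ne: "tl tau \<noteq> []"
    and tbc: "\<forall>i. 0 < i \<and> i < length tau \<longrightarrow> tb ! i \<le> min (tau ! i) (tau ! (i - 1))"
  shows "hd (tl tb) \<le> hd (tl tau)" "hd (tl tb) \<le> hd tau"
proof -
  have l2: "1 < length tau" using ne by (cases tau) auto
  then have "tb ! 1 \<le> min (tau ! 1) (tau ! 0)" using tbc by force
  moreover have "tl tb \<noteq> []" using l2 lt by (cases tb) auto
  then have "hd (tl tb) = tb ! 1" by (cases tb) (simp_all add: hd_conv_nth)
  moreover obtain a rest where "tau = a # rest" and "rest \<noteq> []" using ne by (cases tau) auto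
  then have "hd tau = tau ! 0" "hd (tl tau) = tau ! 1" by (simp_all add: hd_conv_nth)
  ultimately show "hd (tl tb) \<le> hd (tl tau)" "hd (tl tb) \<le> hd tau" by auto
qed

lemma boundary_sum_Cons:
  assumes tn: "tau \<noteq> []" and lt: "length tb = length tau"
  shows "boundary_sum n y sig sb tau tb G = (\<Sum>U\<in>fillings n sig sb. \<Sum>Lh\<in>Row n (hd tau).
     \<Sum>L'\<in>fillings n (tl tau) (tl (tl tb)). if glue (hd (tl tb)) [Lh] L'
       then wts y U * wts y (Lh # L') * G (row_floor U) (last Lh) else 0)"
  unfolding boundary_sum_def
proof (rule sum.cong[OF refl])
  fix U
  have "length (tl tb) = length (tl tau)" using lt by simp
  from fillings_Cons_sum[OF this, where n=n and k="hd tau"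
      and h="\<lambda>L. wts y U * wts y L * G (row_floor U) (row_ceiling n L)"]
  show "(\<Sum>L\<in>fillings n tau (tl tb). wts y U * wts y L * G (row_floor U) (row_ceiling n L))
    = (\<Sum>Lh\<in>Row n (hd tau). \<Sum>L'\<in>fillings n (tl tau) (tl (tl tb)). if glue (hd (tl tb)) [Lh] L'
       then wts y U * wts y (Lh # L') * G (row_floor U) (last Lh) else 0)"
    by (simp only: list.collapse[OF tn] row_ceiling_def list.distinct(2) if_False list.sel(1))
qed

lemma right_merge_sum:
  fixes y :: "nat \<Rightarrow> 'a::comm_ring_1"
  assumes ls: "length sb = length sig" and lt: "length tb = length tau"
    and s1: "\<forall>k\<in>set sig. k \<ge> 1" and t1: "\<forall>k\<in>set tau. k \<ge> 1"
    and lsb: "sig \<noteq> [] \<Longrightarrow> last sb = 1" and tn: "tau \<noteq> []"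
    and tbc: "\<forall>i. 0 < i \<and> i < length tau \<longrightarrow> tb ! i \<le> min (tau ! i) (tau ! (i - 1))"
    and m: "1 \<le> m"
  shows "(\<Sum>ws\<in>fillings n (sig@[m+1, m + hd tau]@tl tau) (sb@[m+1]@tl tb). wts y ws)
       = boundary_sum n y sig sb tau tb (merge_right n y m)"
proof -
  have lt': "length (tl tb) = length (tl tau)" using lt by simp
  have htau: "1 \<le> hd tau" using t1 tn by simp
  have ov: "hd (tl tb) \<le> hd tau" if "L' \<in> fillings n (tl tau) (tl (tl tb))" and "L' \<noteq> []" for L'
  proof -
    have "length L' = length (tl tau)" using that(1) by (simp add: fillings_def)
    then have "tl tau \<noteq> []" using that(2) by (metis length_0_conv length_tl)
    then show ?thesis by (rule hd_tl_overlap(2)[OF lt _ tbc])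
  qed
  show ?thesis
    unfolding fillings_pattern_sum[OF ls lt'] boundary_sum_Cons[OF tn lt]
  proof (rule sum.cong[OF refl])
    fix U assume U: "U \<in> fillings n sig sb"
    define F where "F P N L' = (if glue (last sb) U [P] \<and> compat P N (m + 1) \<and> glue (hd (tl tb)) [N] L'
      then wts y (U @ [P, N] @ L') else 0)" for P N L'
    have "(\<Sum>P\<in>Row n (m+1). \<Sum>N\<in>Row n (m + hd tau). \<Sum>L'\<in>fillings n (tl tau) (tl (tl tb)). F P N L')
      = (\<Sum>P\<in>Row n (m+1). \<Sum>Lh\<in>Row n (hd tau). \<Sum>X\<in>Row n m. \<Sum>L'\<in>fillings n (tl tau) (tl (tl tb)).
           if row_join Lh X then F P (Lh @ X) L' else 0)"
      by (simp only: add.commute[of m] Row_append_sum if_sum)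
    also have "\<dots> = (\<Sum>Lh\<in>Row n (hd tau). \<Sum>P\<in>Row n (m+1). \<Sum>X\<in>Row n m.
        \<Sum>L'\<in>fillings n (tl tau) (tl (tl tb)). if row_join Lh X then F P (Lh @ X) L' else 0)"
      by (rule sum.swap)
    also have "\<dots> = (\<Sum>Lh\<in>Row n (hd tau). \<Sum>L'\<in>fillings n (tl tau) (tl (tl tb)).
        \<Sum>P\<in>Row n (m+1). \<Sum>X\<in>Row n m. if row_join Lh X then F P (Lh @ X) L' else 0)"
      by (rule sum.cong[OF refl], rule sum_rotate3)
    also have "\<dots> = (\<Sum>Lh\<in>Row n (hd tau). \<Sum>L'\<in>fillings n (tl tau) (tl (tl tb)).
        if glue (hd (tl tb)) [Lh] L' then wts y U * wts y (Lh # L')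
          * merge_right n y m (row_floor U) (last Lh) else 0)"
    proof (intro sum.cong refl)
      fix Lh L' assume Lh: "Lh \<in> Row n (hd tau)" and L': "L' \<in> fillings n (tl tau) (tl (tl tb))"
      show "(\<Sum>P\<in>Row n (m+1). \<Sum>X\<in>Row n m. if row_join Lh X then F P (Lh @ X) L' else 0)
        = (if glue (hd (tl tb)) [Lh] L' then wts y U * wts y (Lh # L')
          * merge_right n y m (row_floor U) (last Lh) else 0)"
        unfolding F_def by (rule right_merge_local[OF U s1 lsb Lh htau m ov[OF L']])
    qed
    finally show "(\<Sum>P\<in>Row n (m+1). \<Sum>N\<in>Row n (m + hd tau). \<Sum>L'\<in>fillings n (tl tau) (tl (tl tb)). F P N L')
      = (\<Sum>Lh\<in>Row n (hd tau). \<Sum>L'\<in>fillings n (tl tau) (tl (tl tb)).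
        if glue (hd (tl tb)) [Lh] L' then wts y U * wts y (Lh # L')
          * merge_right n y m (row_floor U) (last Lh) else 0)" .
  qed
qed

lemma left_merge_local:
  fixes y :: "nat \<Rightarrow> 'a::comm_ring_1"
  assumes R: "R \<in> Row n r" and r: "1 \<le> r" and ov: "U' \<noteq> [] \<Longrightarrow> c \<le> r"
    and L: "L \<in> fillings n tau tb'" and t1: "\<forall>k\<in>set tau. k \<ge> 1" and htb: "tau \<noteq> [] \<Longrightarrow> d = 1"
    and m: "1 \<le> m"
  shows "(\<Sum>E\<in>Row n m. \<Sum>P\<in>Row n (m+1). if row_join E R then
        (if glue c U' [E @ R] \<and> compat (E @ R) P (m + 1) \<and> glue d [P] L
         then wts y (U' @ [E @ R, P] @ L) else 0) else 0)
    = (if glue c U' [R] then wts y (U' @ [R]) * wts y L * merge_left n y m (Suc (hd R)) (row_ceiling n L)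
       else 0)"
  unfolding merge_left_def if_sum sum_distrib_left
proof (intro sum.cong refl)
  fix E P assume E: "E \<in> Row n m" and P: "P \<in> Row n (m+1)"
  have Rne: "R \<noteq> []" using R r by (auto simp: Row_iff)
  have Ene: "E \<noteq> []" and lE: "length E = m" and lP: "length P = Suc m" using E P m by (auto simp: Row_iff)
  have "glue c U' [E @ R] = glue c U' [R]"
    using ov R by (cases "U' = []") (auto simp: glue_def compat_app_right Row_iff)
  moreover have "row_join E R = (last E < Suc (hd R))" using Ene Rne by (simp add: row_join_def less_Suc_eq_le)
  moreover have "compat (E @ R) P (m + 1) = ((\<forall>j<m. E!j < P!j) \<and> Suc (hd R) \<le> last P)"
    using compat_split1[OF lE Rne lP] by (simp add: Suc_le_eq)
  moreover have "glue d [P] L = (hd P < row_ceiling n L)"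
    using glue_ceiling[OF L t1 htb P] by simp
  ultimately show "(if row_join E R then (if glue c U' [E @ R] \<and> compat (E @ R) P (m + 1) \<and> glue d [P] L
        then wts y (U' @ [E @ R, P] @ L) else 0) else 0)
    = (if glue c U' [R] then wts y (U' @ [R]) * wts y L * (if last E < Suc (hd R) \<and> (\<forall>j<m. E ! j < P ! j)
        \<and> Suc (hd R) \<le> last P \<and> hd P < row_ceiling n L then wt y E * wt y P else 0) else 0)"
    by (auto simp: ac_simps)
qed

lemma last_butlast_overlap:
  fixes sb sig :: "nat list"
  assumes ls: "length sb = length sig" and ne: "butlast sig \<noteq> []"
    and sbc: "\<forall>i. Suc i < length sig \<longrightarrow> sb ! i \<le> min (sig ! i) (sig ! Suc i)"
  shows "last (butlast sb) \<le> last (butlast sig)" "last (butlast sb) \<le> last sig"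
proof -
  let ?k = "length sig - 2"
  have "2 \<le> length sig" using ne by (cases sig) (auto split: if_splits simp: Suc_le_eq)
  then have l2: "Suc ?k < length sig" "Suc ?k = length sig - 1" by auto
  then have "sb ! ?k \<le> min (sig ! ?k) (sig ! Suc ?k)" using sbc by blast
  moreover have "butlast sb \<noteq> []" using ne ls by (metis length_0_conv length_butlast)
  then have "last (butlast sb) = sb ! ?k" "last (butlast sig) = sig ! ?k" "last sig = sig ! Suc ?k"
    using ne ls l2 by (simp_all add: last_conv_nth nth_butlast numeral_2_eq_2 butlast_conv_take)
  ultimately show "last (butlast sb) \<le> last (butlast sig)" "last (butlast sb) \<le> last sig" by auto
qed

lemma boundary_sum_snoc:
  assumes sn: "sig \<noteq> []" and ls: "length sb = length sig"
  shows "boundary_sum n y sig sb tau tb G = (\<Sum>U'\<in>fillings n (butlast sig) (butlast sb).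
     \<Sum>R\<in>Row n (last sig). if glue (last (butlast sb)) U' [R] then (\<Sum>L\<in>fillings n tau (tl tb).
       wts y (U' @ [R]) * wts y L * G (Suc (hd R)) (row_ceiling n L)) else 0)"
proof -
  have ls': "length (butlast sb) = length (butlast sig)" using ls by simp
  have "fillings n sig sb = fillings n (butlast sig @ [last sig]) (butlast sb @ [last sb])"
    using sn ls by (metis append_butlast_last_id length_0_conv)
  moreover have "row_floor (U' @ [R]) = Suc (hd R)" for U' R by (simp add: row_floor_def)
  ultimately show ?thesis
    unfolding boundary_sum_def by (simp only: fillings_append_sum[OF ls'] fillings_single_sum if_sum)
qed

lemma left_merge_sum:
  fixes y :: "nat \<Rightarrow> 'a::comm_ring_1"
  assumes ls: "length sb = length sig" and lt: "length tb = length tau"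
    and s1: "\<forall>k\<in>set sig. k \<ge> 1" and t1: "\<forall>k\<in>set tau. k \<ge> 1"
    and sn: "sig \<noteq> []" and htb: "tau \<noteq> [] \<Longrightarrow> hd tb = 1"
    and sbc: "\<forall>i. Suc i < length sig \<longrightarrow> sb ! i \<le> min (sig ! i) (sig ! Suc i)"
    and m: "1 \<le> m"
  shows "(\<Sum>ws\<in>fillings n (butlast sig @ [m + last sig, m+1] @ tau) (butlast sb @ [m+1] @ tb). wts y ws)
       = boundary_sum n y sig sb tau tb (merge_left n y m)"
proof -
  have ls': "length (butlast sb) = length (butlast sig)" using ls by simp
  have hsig: "1 \<le> last sig" using s1 sn by simp
  let ?c = "last (butlast sb)"
  have ov: "?c \<le> last sig" if "U' \<in> fillings n (butlast sig) (butlast sb)" and "U' \<noteq> []" for U'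
  proof -
    have "length U' = length (butlast sig)" using that(1) by (simp add: fillings_def)
    then have "butlast sig \<noteq> []" using that(2) by (metis length_0_conv)
    then show ?thesis by (rule last_butlast_overlap(2)[OF ls _ sbc])
  qed
  show ?thesis
    unfolding fillings_pattern_sum[OF ls' lt] boundary_sum_snoc[OF sn ls]
  proof (rule sum.cong[OF refl])
    fix U' assume U': "U' \<in> fillings n (butlast sig) (butlast sb)"
    define F where "F M P L = (if glue ?c U' [M] \<and> compat M P (m + 1) \<and> glue (hd tb) [P] L
      then wts y (U' @ [M, P] @ L) else 0)" for M P L
    have "(\<Sum>M\<in>Row n (m + last sig). \<Sum>P\<in>Row n (m+1). \<Sum>L\<in>fillings n tau (tl tb). F M P L)
      = (\<Sum>E\<in>Row n m. \<Sum>R\<in>Row n (last sig). \<Sum>P\<in>Row n (m+1). \<Sum>L\<in>fillings n tau (tl tb).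
           if row_join E R then F (E @ R) P L else 0)"
      by (subst Row_append_sum[where n=n and ?k1.0=m and ?k2.0="last sig"]) (simp only: if_sum)
    also have "\<dots> = (\<Sum>R\<in>Row n (last sig). \<Sum>E\<in>Row n m. \<Sum>P\<in>Row n (m+1). \<Sum>L\<in>fillings n tau (tl tb).
           if row_join E R then F (E @ R) P L else 0)"
      by (rule sum.swap)
    also have "\<dots> = (\<Sum>R\<in>Row n (last sig). \<Sum>L\<in>fillings n tau (tl tb). \<Sum>E\<in>Row n m. \<Sum>P\<in>Row n (m+1).
           if row_join E R then F (E @ R) P L else 0)"
      by (rule sum.cong[OF refl], rule sum_rotate3)
    also have "\<dots> = (\<Sum>R\<in>Row n (last sig). if glue ?c U' [R] then (\<Sum>L\<in>fillings n tau (tl tb).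
        wts y (U' @ [R]) * wts y L * merge_left n y m (Suc (hd R)) (row_ceiling n L)) else 0)"
      unfolding if_sum
    proof (intro sum.cong refl)
      fix R L assume R: "R \<in> Row n (last sig)" and L: "L \<in> fillings n tau (tl tb)"
      show "(\<Sum>E\<in>Row n m. \<Sum>P\<in>Row n (m+1). if row_join E R then F (E @ R) P L else 0)
        = (if glue ?c U' [R] then wts y (U' @ [R]) * wts y L
          * merge_left n y m (Suc (hd R)) (row_ceiling n L) else 0)"
        unfolding F_def by (rule left_merge_local[OF R hsig ov[OF U'] L t1 htb m])
    qed
    finally show "(\<Sum>M\<in>Row n (m + last sig). \<Sum>P\<in>Row n (m+1). \<Sum>L\<in>fillings n tau (tl tb). F M P L)
      = (\<Sum>R\<in>Row n (last sig). if glue ?c U' [R] then (\<Sum>L\<in>fillings n tau (tl tb).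
        wts y (U' @ [R]) * wts y L * merge_left n y m (Suc (hd R)) (row_ceiling n L)) else 0)" .
  qed
qed

lemma admissible_append:
  assumes lb: "length b1 = length a1" and o1: "admissible a1 b1" and o2: "admissible a2 b2"
    and j: "a1 \<noteq> [] \<Longrightarrow> a2 \<noteq> [] \<Longrightarrow> last b1 \<le> last a1 \<and> last b1 \<le> hd a2"
  shows "admissible (a1@a2) (b1@b2)"
  unfolding admissible_def
proof (intro allI impI)
  fix i assume i: "Suc i < length (a1 @ a2)"
  let ?L = "length a1"
  show "(b1 @ b2) ! i \<le> (a1 @ a2) ! i \<and> (b1 @ b2) ! i \<le> (a1 @ a2) ! Suc i"
  proof (cases "Suc i < ?L")
    case True then show ?thesis using o1 lb by (simp add: admissible_def nth_append)
  next
    case False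
    show ?thesis
    proof (cases "Suc i = ?L")
      case True
      have a1ne: "a1 \<noteq> []" and a2ne: "a2 \<noteq> []" using True i by auto
      have b1ne: "b1 \<noteq> []" using a1ne lb by auto
      have "(b1@b2)!i = last b1" using True lb b1ne by (simp add: nth_append last_conv_nth True[symmetric])
      moreover have "(a1@a2)!i = last a1" using True a1ne by (simp add: nth_append last_conv_nth True[symmetric])
      moreover have "(a1@a2)!Suc i = hd a2" using True a2ne by (simp add: nth_append hd_conv_nth)
      ultimately show ?thesis using j[OF a1ne a2ne] by simp
    next
      case False2: False
      then have iL: "?L \<le> i" using False by simp
      have "Suc (i - ?L) < length a2" using i iL by simp
      then have "b2 ! (i - ?L) \<le> a2 ! (i - ?L) \<and> b2 ! (i - ?L) \<le> a2 ! Suc (i - ?L)"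
        using o2 by (simp add: admissible_def)
      moreover have "Suc (i - ?L) = Suc i - ?L" using iL by simp
      ultimately show ?thesis using iL lb by (simp add: nth_append)
    qed
  qed
qed

lemma admissible_single: "admissible [k] b" by (simp add: admissible_def)

lemma admissible_cong: "(\<And>i. Suc i < length a \<Longrightarrow> b!i = b'!i) \<Longrightarrow> admissible a b = admissible a b'"
  by (simp add: admissible_def)

lemma admissible_pattern:
  assumes ls: "length sb = length sig" and lt: "length tb = length tau"
    and os: "admissible sig sb" and ot: "admissible tau (tl tb)"
    and js: "sig \<noteq> [] \<Longrightarrow> last sb \<le> last sig \<and> last sb \<le> k1"
    and x1: "x \<le> k1" and x2: "x \<le> k2"
    and jt: "tau \<noteq> [] \<Longrightarrow> hd tb \<le> k2 \<and> hd tb \<le> hd tau"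
  shows "admissible (sig@[k1,k2]@tau) (sb@[x]@tb)"
proof -
  have e1: "sig@[k1,k2]@tau = sig @ ([k1] @ ([k2] @ tau))" by simp
  have o3: "admissible ([k2] @ tau) tb"
  proof -
    have hh: "tau \<noteq> [] \<Longrightarrow> hd (tb@[0]) = hd tb" using lt by (cases tb) auto
    have "admissible ([k2] @ tau) ([hd (tb@[0])] @ tl tb)"
      using admissible_single ot jt hh by (intro admissible_append) auto
    moreover have "admissible ([k2] @ tau) tb = admissible ([k2] @ tau) ([hd (tb@[0])] @ tl tb)"
      by (rule admissible_cong) (use lt in \<open>cases tb; auto simp: nth_Cons split: nat.splits\<close>)
    ultimately show ?thesis by simp
  qed
  have o4: "admissible ([k1] @ ([k2] @ tau)) ([x] @ tb)"
    using admissible_single o3 x1 x2 by (intro admissible_append) auto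
  show ?thesis unfolding e1
    using os o4 js by (intro admissible_append[OF ls]) auto
qed

lemma admissible_tl: "length a \<le> Suc (length b) \<Longrightarrow> admissible a b \<Longrightarrow> admissible (tl a) (tl b)"
  unfolding admissible_def
proof (intro allI impI)
  fix i assume l: "length a \<le> Suc (length b)" and o: "\<forall>i. Suc i < length a \<longrightarrow> b ! i \<le> a ! i \<and> b ! i \<le> a ! Suc i"
    and i: "Suc i < length (tl a)"
  have "Suc (Suc i) < length a" using i by simp
  then have "b ! Suc i \<le> a ! Suc i \<and> b ! Suc i \<le> a ! Suc (Suc i)" using o by blast
  moreover have "tl b ! i = b ! Suc i" "tl a ! i = a ! Suc i" "tl a ! Suc i = a ! Suc (Suc i)"
    using i l by (simp_all add: nth_tl)
  ultimately show "tl b ! i \<le> tl a ! i \<and> tl b ! i \<le> tl a ! Suc i" by simp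
qed

definition standing :: "nat list \<Rightarrow> nat list \<Rightarrow> nat list \<Rightarrow> nat list \<Rightarrow> bool" where
  "standing sigma sb tau tb \<longleftrightarrow> (\<forall>k\<in>set sigma. k \<ge> 1) \<and> (\<forall>k\<in>set tau. k \<ge> 1)
    \<and> length sb = length sigma \<and> length tb = length tau
    \<and> (sigma \<noteq> [] \<longrightarrow> last sb = 1) \<and> (tau \<noteq> [] \<longrightarrow> hd tb = 1)
    \<and> (\<forall>i. Suc i < length sigma \<longrightarrow> sb ! i \<le> min (sigma ! i) (sigma ! Suc i))
    \<and> (\<forall>i. 0 < i \<and> i < length tau \<longrightarrow> tb ! i \<le> min (tau ! i) (tau ! (i - 1)))"

lemma standing_admissible:
  assumes "standing sigma sb tau tb"
  shows "admissible sigma sb" "admissible tau (tl tb)"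
proof -
  show "admissible sigma sb" using assms by (simp add: standing_def admissible_def)
  show "admissible tau (tl tb)" unfolding admissible_def
  proof (intro allI impI)
    fix i assume i: "Suc i < length tau"
    then have "tb ! Suc i \<le> min (tau ! Suc i) (tau ! i)" "tl tb ! i = tb ! Suc i"
      using assms by (auto simp: standing_def nth_tl)
    then show "tl tb ! i \<le> tau ! i \<and> tl tb ! i \<le> tau ! Suc i" by simp
  qed
qed

lemma skew_schur_adjacent:
  assumes std: "standing sigma sb tau tb"
    and k1: "1 \<le> k1" and k2: "1 \<le> k2" and x1: "x \<le> k1" and x2: "x \<le> k2"
  shows "skew_schur n y (sigma @ [k1, k2] @ tau) (sb @ [x] @ tb)
       = boundary_sum n y sigma sb tau tb (adj_pair n y k1 k2 x)"
proof -
  have adm: "admissible (sigma @ [k1, k2] @ tau) (sb @ [x] @ tb)"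
    using std standing_admissible[OF std] x1 x2 k1 k2
    by (intro admissible_pattern) (auto simp: standing_def)
  show ?thesis
    unfolding skew_schur_fillings[OF adm] by (rule adjacent_rows_sum) (use std k1 k2 in \<open>auto simp: standing_def\<close>)
qed

lemma skew_schur_left_merge:
  assumes std: "standing sigma sb tau tb" and sn: "sigma \<noteq> []" and m: "1 \<le> m"
  shows "skew_schur n y (butlast sigma @ [m + last sigma, m + 1] @ tau) (butlast sb @ [m + 1] @ tb)
       = boundary_sum n y sigma sb tau tb (merge_left n y m)"
proof -
  have ls: "length sb = length sigma" and os: "admissible sigma sb" and ot: "admissible tau (tl tb)"
    using std standing_admissible[OF std] by (auto simp: standing_def)
  have ob: "admissible (butlast sigma) (butlast sb)"
    using os ls by (auto simp: admissible_def nth_butlast)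
  have jb: "last (butlast sb) \<le> last (butlast sigma) \<and> last (butlast sb) \<le> m + last sigma"
    if "butlast sigma \<noteq> []"
    using last_butlast_overlap[OF ls that] std by (auto simp: standing_def trans_le_add2)
  have adm: "admissible (butlast sigma @ [m + last sigma, m + 1] @ tau) (butlast sb @ [m + 1] @ tb)"
    using ls ob ot jb std sn by (intro admissible_pattern) (auto simp: standing_def)
  show ?thesis
    unfolding skew_schur_fillings[OF adm] by (rule left_merge_sum) (use std sn m in \<open>auto simp: standing_def\<close>)
qed

lemma skew_schur_right_merge:
  assumes std: "standing sigma sb tau tb" and tn: "tau \<noteq> []" and m: "1 \<le> m"
  shows "skew_schur n y (sigma @ [m + 1, m + hd tau] @ tl tau) (sb @ [m + 1] @ tl tb)
       = boundary_sum n y sigma sb tau tb (merge_right n y m)"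
proof -
  have lt: "length tb = length tau" and os: "admissible sigma sb" and ot: "admissible tau (tl tb)"
    using std standing_admissible[OF std] by (auto simp: standing_def)
  have ott: "admissible (tl tau) (tl (tl tb))" using admissible_tl[OF _ ot] lt by simp
  have jt: "hd (tl tb) \<le> m + hd tau \<and> hd (tl tb) \<le> hd (tl tau)" if "tl tau \<noteq> []"
    using hd_tl_overlap[OF lt that] std by (auto simp: standing_def trans_le_add2)
  have adm: "admissible (sigma @ [m + 1, m + hd tau] @ tl tau) (sb @ [m + 1] @ tl tb)"
    using lt os ott jt std tn by (intro admissible_pattern) (auto simp: standing_def)
  show ?thesis
    unfolding skew_schur_fillings[OF adm] by (rule right_merge_sum) (use std tn m in \<open>auto simp: standing_def\<close>)
qed

lemma boundary_sum_merge_left_Nil: "boundary_sum n y [] sb tau tb (merge_left n y m) = 0"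
  by (simp add: boundary_sum_def fillings_Nil row_floor_def merge_left_def)

lemma boundary_sum_merge_right_Nil:
  assumes m: "1 \<le> m"
  shows "boundary_sum n y sigma sb [] tb (merge_right n y m) = 0"
proof -
  have "merge_right n y m low n = 0" for low
    unfolding merge_right_def by (intro sum.neutral ballI) (use Row_hd_bound m in fastforce)
  then show ?thesis by (simp add: boundary_sum_def fillings_Nil row_ceiling_def)
qed

theorem corollary2p7:
  fixes sigma tau sb tb :: "nat list" and m x n :: nat and y :: "nat \<Rightarrow> 'a::comm_ring_1"
  assumes "\<forall>k\<in>set sigma. k \<ge> 1" and "\<forall>k\<in>set tau. k \<ge> 1"
    and "length sb = length sigma" and "length tb = length tau"
    and "sigma \<noteq> [] \<Longrightarrow> last sb = 1"
    and "tau \<noteq> [] \<Longrightarrow> hd tb = 1"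
    and "\<forall>i. Suc i < length sigma \<longrightarrow> sb ! i \<le> min (sigma ! i) (sigma ! Suc i)"
    and "\<forall>i. 0 < i \<and> i < length tau \<longrightarrow> tb ! i \<le> min (tau ! i) (tau ! (i - 1))"
    and "m \<ge> 1" and "x \<le> m"
  shows "skew_schur n y (sigma @ [m, m + 1] @ tau) (sb @ [x] @ tb)
       - skew_schur n y (sigma @ [m + 1, m] @ tau) (sb @ [x] @ tb)
     = (if sigma = [] then 0
        else - skew_schur n y (butlast sigma @ [m + last sigma, m + 1] @ tau) (butlast sb @ [m + 1] @ tb))
     + (if tau = [] then 0
        else skew_schur n y (sigma @ [m + 1, m + hd tau] @ tl tau) (sb @ [m + 1] @ tl tb))"
proof -
  have std: "standing sigma sb tau tb" using assms(1-8) by (simp add: standing_def)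
  note m = \<open>m \<ge> 1\<close> and x = \<open>x \<le> m\<close>
  let ?B = "boundary_sum n y sigma sb tau tb"
  have "skew_schur n y (sigma @ [m, m + 1] @ tau) (sb @ [x] @ tb)
       - skew_schur n y (sigma @ [m + 1, m] @ tau) (sb @ [x] @ tb)
      = ?B (adj_pair n y m (m+1) x) - ?B (adj_pair n y (m+1) m x)"
    using skew_schur_adjacent[OF std, where ?k1.0=m and ?k2.0="m+1" and x=x and n=n and y=y]
      skew_schur_adjacent[OF std, where ?k1.0="m+1" and ?k2.0=m and x=x and n=n and y=y] m x
    by simp
  also have "\<dots> = ?B (merge_right n y m) - ?B (merge_left n y m)"
    by (simp only: boundary_sum_diff local_identity[OF m x])
  also have "?B (merge_left n y m) = (if sigma = [] then 0
      else skew_schur n y (butlast sigma @ [m + last sigma, m + 1] @ tau) (butlast sb @ [m + 1] @ tb))"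
    using skew_schur_left_merge[OF std _ m, where n=n and y=y] by (simp add: boundary_sum_merge_left_Nil)
  also have "?B (merge_right n y m) = (if tau = [] then 0
      else skew_schur n y (sigma @ [m + 1, m + hd tau] @ tl tau) (sb @ [m + 1] @ tl tb))"
    using skew_schur_right_merge[OF std _ m, where n=n and y=y] by (simp add: boundary_sum_merge_right_Nil[OF m])
  finally show ?thesis by simp
qed

end
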